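(* Let $\mathcal{A}$ be a unital commutative $C^*$-algebra and let $F\in B^a(H_{\mathcal{A}})$ be self-adjoint. If $\alpha\in\mathcal{A}$ and $\alpha-\alpha^*\in G(\mathcal{A})$, then $F-\alpha I$ is invertible in $B^a(H_{\mathcal{A}})$, and $\|(F-\alpha I)^{-1}\|\le 2\|(\alpha-\alpha^* )^{-1}\|$.
   Context: $G(\mathcal{A})$ is the group of invertible elements of $\mathcal{A}$. $H_{\mathcal{A}}=l_2(\mathcal{A})$ is the standard Hilbert $C^*$-module of sequences $(x_1,x_2,\dots)$ in $\mathcal{A}$ with $\sum_k x_k^*x_k$ norm-convergent, inner product $\langle x,y\rangle=\sum_k x_k^*y_k$. $B^a(H_{\mathcal{A}})$ denotes the bounded adjointable $\mathcal{A}$-linear operators on $H_{\mathcal{A}}$. For $\alpha\in\mathcal{A}$, $\alpha I$ is the operator $(x_k)\mapsto(\alpha x_k)$. *)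

theory Defs
  imports "HOL-Analysis.Analysis"
begin

class comm_cstar_algebra = real_normed_algebra_1 + comm_ring_1 + banach +
  fixes cscale :: "complex \<Rightarrow> 'a \<Rightarrow> 'a"
    and cstar :: "'a \<Rightarrow> 'a"
  assumes cscale_add_left: "cscale (a + b) x = cscale a x + cscale b x"
    and cscale_add_right: "cscale a (x + y) = cscale a x + cscale a y"
    and cscale_mult: "cscale (a * b) x = cscale a (cscale b x)"
    and cscale_one: "cscale 1 x = x"
    and cscale_of_real: "cscale (of_real r) x = scaleR r x"
    and norm_cscale: "norm (cscale a x) = cmod a * norm x"
    and cscale_mult_left: "cscale a (x * y) = cscale a x * y"
    and cscale_mult_right: "cscale a (x * y) = x * cscale a y"
    and cstar_cstar: "cstar (cstar x) = x"
    and cstar_add: "cstar (x + y) = cstar x + cstar y"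
    and cstar_cscale: "cstar (cscale a x) = cscale (cnj a) (cstar x)"
    and cstar_mult: "cstar (x * y) = cstar y * cstar x"
    and cstar_identity: "norm (cstar x * x) = norm x ^ 2"

definition HA :: "(nat \<Rightarrow> 'a::comm_cstar_algebra) set" where
  "HA = {x. summable (\<lambda>k. cstar (x k) * x k)}"

definition hinner :: "(nat \<Rightarrow> 'a::comm_cstar_algebra) \<Rightarrow> (nat \<Rightarrow> 'a) \<Rightarrow> 'a" where
  "hinner x y = (\<Sum>k. cstar (x k) * y k)"

definition hnorm :: "(nat \<Rightarrow> 'a::comm_cstar_algebra) \<Rightarrow> real" where
  "hnorm x = sqrt (norm (hinner x x))"

text \<open>Bounded adjointable A-linear operators on H_A (values off H_A are irrelevant).\<close>

definition Ba :: "((nat \<Rightarrow> 'a::comm_cstar_algebra) \<Rightarrow> (nat \<Rightarrow> 'a)) set" where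
  "Ba = {T. (\<forall>x\<in>HA. T x \<in> HA)
          \<and> (\<forall>x\<in>HA. \<forall>y\<in>HA. T (\<lambda>k. x k + y k) = (\<lambda>k. T x k + T y k))
          \<and> (\<forall>x\<in>HA. \<forall>a. T (\<lambda>k. x k * a) = (\<lambda>k. T x k * a))
          \<and> (\<exists>C. \<forall>x\<in>HA. hnorm (T x) \<le> C * hnorm x)
          \<and> (\<exists>S. (\<forall>y\<in>HA. S y \<in> HA) \<and>
                 (\<forall>x\<in>HA. \<forall>y\<in>HA. hinner (T x) y = hinner x (S y)))}"

definition self_adjoint_op :: "((nat \<Rightarrow> 'a::comm_cstar_algebra) \<Rightarrow> (nat \<Rightarrow> 'a)) \<Rightarrow> bool" where
  "self_adjoint_op T \<longleftrightarrow> T \<in> Ba \<and> (\<forall>x\<in>HA. \<forall>y\<in>HA. hinner (T x) y = hinner x (T y))"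

definition opnorm :: "((nat \<Rightarrow> 'a::comm_cstar_algebra) \<Rightarrow> (nat \<Rightarrow> 'a)) \<Rightarrow> real" where
  "opnorm T = Sup {hnorm (T x) | x. x \<in> HA \<and> hnorm x \<le> 1}"

definition is_Ba_inverse :: "((nat \<Rightarrow> 'a::comm_cstar_algebra) \<Rightarrow> (nat \<Rightarrow> 'a)) \<Rightarrow> ((nat \<Rightarrow> 'a) \<Rightarrow> (nat \<Rightarrow> 'a)) \<Rightarrow> bool" where
  "is_Ba_inverse G T \<longleftrightarrow> G \<in> Ba \<and> (\<forall>x\<in>HA. G (T x) = x \<and> T (G x) = x)"

definition scal_op :: "'a::comm_cstar_algebra \<Rightarrow> (nat \<Rightarrow> 'a) \<Rightarrow> (nat \<Rightarrow> 'a)" where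
  "scal_op a x = (\<lambda>k. a * x k)"

definition op_diff :: "((nat \<Rightarrow> 'a::comm_cstar_algebra) \<Rightarrow> (nat \<Rightarrow> 'a)) \<Rightarrow> ((nat \<Rightarrow> 'a) \<Rightarrow> (nat \<Rightarrow> 'a)) \<Rightarrow> (nat \<Rightarrow> 'a) \<Rightarrow> (nat \<Rightarrow> 'a)" where
  "op_diff S T x = (\<lambda>k. S x k - T x k)"

end

theory Submission
  imports Defs "HOL-Library.Function_Algebras"
begin

section \<open>The involution and the complex structure\<close>

declare cstar_cstar [simp]

lemma cstar_zero [simp]: "cstar (0::'a::comm_cstar_algebra) = 0"
  using cstar_add[of "0::'a" 0] by simp

lemma cstar_minus [simp]: "cstar (- x) = - cstar (x::'a::comm_cstar_algebra)"
  using cstar_add[of x "-x"] by (simp add: minus_unique)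

lemma cstar_diff [simp]: "cstar (x - y) = cstar x - cstar (y::'a::comm_cstar_algebra)"
  using cstar_add[of x "-y"] by simp

lemma cstar_mult_distrib [simp]: "cstar (x * y) = cstar x * cstar (y::'a::comm_cstar_algebra)"
  by (simp add: cstar_mult mult.commute)

lemma cstar_one [simp]: "cstar (1::'a::comm_cstar_algebra) = 1"
  using cstar_mult[of "cstar (1::'a)" 1] by simp

lemma cstar_power [simp]: "cstar (x ^ n) = cstar (x::'a::comm_cstar_algebra) ^ n"
  by (induct n) auto

lemma cstar_scaleR [simp]: "cstar (r *\<^sub>R x) = r *\<^sub>R cstar (x::'a::comm_cstar_algebra)"
  using cstar_cscale[of "of_real r" x] by (simp add: cscale_of_real)

lemma cstar_of_real [simp]: "cstar (of_real r :: 'a::comm_cstar_algebra) = of_real r"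
  by (simp add: of_real_def)

lemma norm_cstar [simp]: "norm (cstar x) = norm (x::'a::comm_cstar_algebra)"
proof -
  have le: "norm y \<le> norm (cstar y)" for y :: 'a
  proof (cases "y = 0")
    case False
    have "norm y * norm y = norm (cstar y * y)" by (simp add: cstar_identity power2_eq_square)
    also have "\<dots> \<le> norm (cstar y) * norm y" by (rule norm_mult_ineq)
    finally show ?thesis using False by simp
  qed simp
  show ?thesis using le[of x] le[of "cstar x"] by simp
qed

lemma bounded_linear_cstar: "bounded_linear (cstar :: 'a::comm_cstar_algebra \<Rightarrow> 'a)"
  by (rule bounded_linear_intro[where K=1]) (auto simp: cstar_add)

lemma cstar_suminf:
  "summable f \<Longrightarrow> cstar (suminf f) = (\<Sum>n. cstar (f n :: 'a::comm_cstar_algebra))"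
  using bounded_linear.suminf[OF bounded_linear_cstar] by blast

lemma tendsto_cstar:
  "(f \<longlongrightarrow> l) F \<Longrightarrow> ((\<lambda>x. cstar (f x :: 'a::comm_cstar_algebra)) \<longlongrightarrow> cstar l) F"
  using bounded_linear.tendsto[OF bounded_linear_cstar] by blast

lemma cstar_exp: "cstar (exp x) = exp (cstar (x::'a::comm_cstar_algebra))"
  unfolding exp_def
  by (subst cstar_suminf[OF summable_exp_generic]) (simp add: divide_inverse)

definition of_complex :: "complex \<Rightarrow> 'a::comm_cstar_algebra" where
  "of_complex z = cscale z 1"

lemma cscale_eq_of_complex_mult: "cscale z x = of_complex z * (x::'a::comm_cstar_algebra)"
  using cscale_mult_left[of z 1 x] by (simp add: of_complex_def)

lemma of_complex_mult: "of_complex (z * w) = (of_complex z * of_complex w :: 'a::comm_cstar_algebra)"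
  unfolding of_complex_def cscale_mult by (rule cscale_eq_of_complex_mult[unfolded of_complex_def])

lemma of_complex_add: "of_complex (z + w) = (of_complex z + of_complex w :: 'a::comm_cstar_algebra)"
  by (simp add: of_complex_def cscale_add_left)

lemma of_complex_of_real [simp]: "of_complex (of_real r) = (of_real r :: 'a::comm_cstar_algebra)"
  unfolding of_complex_def cscale_of_real by (simp add: of_real_def)

lemma of_complex_0 [simp]: "of_complex 0 = (0 :: 'a::comm_cstar_algebra)"
  and of_complex_1 [simp]: "of_complex 1 = (1 :: 'a::comm_cstar_algebra)"
  using of_complex_of_real[of 0] of_complex_of_real[of 1] by simp_all

lemma norm_of_complex [simp]: "norm (of_complex z :: 'a::comm_cstar_algebra) = cmod z"
  by (simp add: of_complex_def norm_cscale)

lemma cstar_of_complex [simp]: "cstar (of_complex z :: 'a::comm_cstar_algebra) = of_complex (cnj z)"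
  by (simp add: of_complex_def cstar_cscale)

lemma of_complex_sum: "of_complex (sum f I) = (\<Sum>i\<in>I. of_complex (f i) :: 'a::comm_cstar_algebra)"
  by (induct I rule: infinite_finite_induct) (auto simp: of_complex_add)

lemma of_complex_power: "of_complex (z ^ n) = (of_complex z ^ n :: 'a::comm_cstar_algebra)"
  by (induct n) (auto simp: of_complex_mult)

lemma of_complex_minus [simp]: "of_complex (- z) = (- of_complex z :: 'a::comm_cstar_algebra)"
  using of_complex_add[of z "- z"] by (metis add.commute add.right_inverse eq_neg_iff_add_eq_0 of_complex_0)

lemma of_complex_scaleR: "of_complex (r *\<^sub>R z) = (r *\<^sub>R of_complex z :: 'a::comm_cstar_algebra)"
  by (simp add: scaleR_conv_of_real of_complex_mult)

lemma of_complex_i_squared: "of_complex \<i> * of_complex \<i> = (-1 :: 'a::comm_cstar_algebra)"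
  using of_complex_of_real[of "-1", where 'a='a] by (simp flip: of_complex_mult)

lemma of_complex_Re_Im:
  "of_complex z = (of_real (Re z) + of_real (Im z) * of_complex \<i> :: 'a::comm_cstar_algebra)"
  by (subst complex_eq) (simp add: of_complex_add of_complex_mult)

section \<open>The exponential series in commutative Banach algebras\<close>

lemma exp_add_commutative:
  "exp (x + y) = exp x * exp (y::'a::{real_normed_algebra_1,banach,comm_ring_1})"
  by (simp add: exp_add_commuting mult.commute)

lemma exp_of_nat_mult_commutative:
  "exp (of_nat n * x) = exp (x::'a::{real_normed_algebra_1,banach,comm_ring_1}) ^ n"
  by (induct n) (simp_all add: distrib_right exp_add_commutative)

lemma norm_exp_minus_taylor_le:
  fixes w :: "'a::{real_normed_algebra_1,banach}"
  shows "norm (exp w - (\<Sum>m<K. w ^ m /\<^sub>R fact m)) \<le> norm w ^ K * exp (norm w)"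
proof -
  have "exp w - (\<Sum>m<K. w ^ m /\<^sub>R fact m) = (\<Sum>j. w ^ (j + K) /\<^sub>R fact (j + K))"
    using suminf_split_initial_segment[OF summable_exp_generic[of w], of K] by (simp add: exp_def)
  also have "norm \<dots> \<le> (\<Sum>j. norm w ^ K * (norm w ^ j /\<^sub>R fact j))"
  proof (rule norm_suminf_le)
    fix j
    have "norm (w ^ (j + K) /\<^sub>R fact (j + K)) = norm (w ^ (j + K)) / fact (j + K)"
      by (simp add: field_simps)
    also have "\<dots> \<le> norm w ^ (j + K) / fact (j + K)"
      by (rule divide_right_mono[OF norm_power_ineq]) simp
    also have "\<dots> \<le> norm w ^ (j + K) / fact j"
      by (intro divide_left_mono) (auto simp: fact_mono)
    finally show "norm (w ^ (j + K) /\<^sub>R fact (j + K)) \<le> norm w ^ K * (norm w ^ j /\<^sub>R fact j)"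
      by (simp add: power_add field_simps)
  qed (intro summable_mult summable_exp_generic)
  also have "\<dots> = norm w ^ K * exp (norm w)"
    unfolding exp_def by (rule suminf_mult[OF summable_exp_generic])
  finally show ?thesis .
qed

lemma norm_exp_minus_taylor_le_small:
  fixes w :: "'a::{real_normed_algebra_1,banach}"
  assumes "norm w \<le> 1"
  shows "norm (exp w - (\<Sum>m<K. w ^ m /\<^sub>R fact m)) \<le> 3 * norm w ^ K"
proof -
  have "exp (norm w) \<le> 3" using assms exp_le by (meson exp_le_cancel_iff order_trans)
  then have "norm w ^ K * exp (norm w) \<le> norm w ^ K * 3" by (simp add: mult_left_mono)
  then show ?thesis using norm_exp_minus_taylor_le[of w K] by linarith
qed

lemma tendsto_exp_commutative:
  fixes f :: "_ \<Rightarrow> 'a::{real_normed_algebra_1,banach,comm_ring_1}"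
  assumes "(f \<longlongrightarrow> l) F"
  shows "((\<lambda>x. exp (f x)) \<longlongrightarrow> exp l) F"
proof -
  define g where "g x = norm (exp l) * (norm (f x - l) ^ 1 * exp (norm (f x - l)))" for x
  have "((\<lambda>x. f x - l) \<longlongrightarrow> 0) F" using tendsto_diff[OF assms tendsto_const[of l]] by simp
  then have "(g \<longlongrightarrow> norm (exp l) * (0 ^ 1 * exp 0)) F"
    unfolding g_def by (intro tendsto_intros tendsto_norm_zero)
  then have g: "(g \<longlongrightarrow> 0) F" by simp
  have bound: "norm (exp (f x) - exp l) \<le> g x" for x
  proof -
    have "exp (f x) - exp l = exp l * (exp (f x - l) - (\<Sum>m<1. (f x - l) ^ m /\<^sub>R fact m))"
      by (simp add: algebra_simps flip: exp_add_commutative)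
    then have "norm (exp (f x) - exp l) \<le> norm (exp l) * norm (exp (f x - l) - (\<Sum>m<1. (f x - l) ^ m /\<^sub>R fact m))"
      by (simp only: norm_mult_ineq)
    also have "\<dots> \<le> g x"
      unfolding g_def by (rule mult_left_mono[OF norm_exp_minus_taylor_le]) simp
    finally show ?thesis .
  qed
  have "eventually (\<lambda>x. norm (exp (f x) - exp l) \<le> g x) F"
    using bound by (simp add: always_eventually)
  then have "((\<lambda>x. exp (f x) - exp l) \<longlongrightarrow> 0) F"
    using g by (rule Lim_null_comparison)
  then show ?thesis by (rule Lim_null[THEN iffD2])
qed

section \<open>Self-adjoint elements and exponential growth\<close>

definition selfadjoint :: "'a::comm_cstar_algebra \<Rightarrow> bool" where
  "selfadjoint h \<longleftrightarrow> cstar h = h"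

definition exp_growth :: "'a::comm_cstar_algebra \<Rightarrow> real \<Rightarrow> bool" where
  "exp_growth h c \<longleftrightarrow> (\<forall>t\<ge>0. norm (exp (t *\<^sub>R h)) \<le> exp (t * c))"

lemma selfadjoint_add: "selfadjoint a \<Longrightarrow> selfadjoint b \<Longrightarrow> selfadjoint (a + b)"
  by (simp add: selfadjoint_def cstar_add)

lemma selfadjoint_diff: "selfadjoint a \<Longrightarrow> selfadjoint b \<Longrightarrow> selfadjoint (a - b)"
  by (simp add: selfadjoint_def)

lemma selfadjoint_mult: "selfadjoint a \<Longrightarrow> selfadjoint b \<Longrightarrow> selfadjoint (a * b)"
  by (simp add: selfadjoint_def)

lemma selfadjoint_scaleR: "selfadjoint a \<Longrightarrow> selfadjoint (r *\<^sub>R a)"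
  by (simp add: selfadjoint_def)

lemma norm_exp_imag_selfadjoint:
  assumes "selfadjoint h"
  shows "norm (exp (of_complex \<i> * h)) = 1"
proof -
  define w where "w = of_complex \<i> * h"
  have "cstar w = - w" using assms by (simp add: w_def selfadjoint_def)
  then have "cstar (exp w) * exp w = 1"
    using exp_minus_inverse[of w] by (simp add: cstar_exp mult.commute)
  then have "norm (exp w) ^ 2 = 1" by (metis cstar_identity norm_one)
  then show ?thesis unfolding w_def by (simp add: power2_eq_1_iff) (smt (verit) norm_ge_zero)
qed

lemma norm_exp_of_complex_mult_le:
  assumes "selfadjoint h" "exp_growth h c" "exp_growth (- h) c"
  shows "norm (exp (of_complex z * h)) \<le> exp (\<bar>Re z\<bar> * c)"
proof -
  have "of_complex z * h = Re z *\<^sub>R h + of_complex \<i> * (Im z *\<^sub>R h)"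
    by (subst of_complex_Re_Im) (simp add: distrib_left distrib_right scaleR_conv_of_real ac_simps)
  then have "exp (of_complex z * h) = exp (Re z *\<^sub>R h) * exp (of_complex \<i> * (Im z *\<^sub>R h))"
    by (simp add: exp_add_commuting mult.commute)
  also have "norm \<dots> \<le> norm (exp (Re z *\<^sub>R h))"
    using norm_mult_ineq norm_exp_imag_selfadjoint[OF selfadjoint_scaleR[OF assms(1)]]
    by (metis mult.right_neutral)
  also have "\<dots> \<le> exp (\<bar>Re z\<bar> * c)"
  proof (cases "Re z \<ge> 0")
    case True
    then show ?thesis using assms(2) by (simp add: exp_growth_def)
  next
    case False
    then show ?thesis using assms(3)[unfolded exp_growth_def, rule_format, of "- Re z"] by simp
  qed
  finally show ?thesis .
qed

definition root_unity :: "nat \<Rightarrow> complex" where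
  "root_unity N = exp (2 * of_real pi * \<i> / of_nat N)"

lemma norm_root_unity [simp]: "norm (root_unity N) = 1"
proof -
  have "root_unity N = exp (\<i> * of_real (2 * pi / N))" by (simp add: root_unity_def field_simps)
  then show ?thesis by simp
qed

lemma roots_of_unity_orthogonal:
  fixes N n m :: nat
  assumes "n < N" "m < N"
  shows "(\<Sum>j<N. (root_unity N ^ (N - n)) ^ j * (root_unity N ^ j) ^ m) = (if m = n then of_nat N else 0)"
proof -
  define p where "p = N - n + m"
  have N: "1 \<le> N" using assms by simp
  have "(root_unity N ^ (N - n)) ^ j * (root_unity N ^ j) ^ m = (root_unity N ^ p) ^ j" for j
    by (simp add: p_def power_add power_mult_distrib flip: power_mult) (simp add: ac_simps)
  moreover have \<zeta>p: "root_unity N ^ p = exp (2 * of_real pi * \<i> * of_nat p / of_nat N)"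
    by (simp add: root_unity_def ac_simps flip: exp_of_nat_mult)
  moreover have "N dvd p \<longleftrightarrow> m = n"
  proof
    assume "N dvd p"
    then obtain k where k: "p = N * k" by (elim dvdE)
    have "0 < p" "p < N * 2" using assms by (auto simp: p_def)
    then have "0 < k" "k < 2" using k by simp_all
    then have "p = N" using k by simp
    then show "m = n" using assms by (simp add: p_def)
  qed (simp add: p_def assms(1) less_imp_le)
  moreover have "(\<Sum>j<N. (root_unity N ^ p) ^ j) = (if N dvd p then of_nat N else 0)"
  proof (cases "N dvd p")
    case True
    then have "root_unity N ^ p = 1" using N by (simp add: \<zeta>p complex_root_unity_eq_1)
    then show ?thesis using True by simp
  next
    case False
    moreover have "(root_unity N ^ p) ^ N = 1" using N by (simp add: \<zeta>p complex_root_unity)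
    ultimately show ?thesis using N by (simp add: \<zeta>p complex_root_unity_eq_1 geometric_sum)
  qed
  ultimately show ?thesis by simp
qed

lemma exp_of_complex_mult_sums:
  "(\<lambda>m. of_complex (z ^ m /\<^sub>R fact m) * h ^ m) sums exp (of_complex z * (h::'a::comm_cstar_algebra))"
proof -
  have "(of_complex z * h) ^ m /\<^sub>R fact m = of_complex (z ^ m /\<^sub>R fact m) * h ^ m" for m
    by (simp add: power_mult_distrib of_complex_power of_complex_scaleR)
  then show ?thesis using exp_converges[of "of_complex z * h"] by simp
qed

text \<open>The discretisation, over the N-th roots of unity, of the Cauchy integral for the n-th
  Taylor coefficient of z \<mapsto> exp (z h) on the circle of radius R.\<close>

definition cauchy_average :: "nat \<Rightarrow> nat \<Rightarrow> real \<Rightarrow> 'a::comm_cstar_algebra \<Rightarrow> 'a" where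
  "cauchy_average N n R h = (\<Sum>j<N. of_complex ((root_unity N ^ (N - n)) ^ j / of_nat N)
      * exp (of_complex (of_real R * root_unity N ^ j) * h))"

lemma norm_cauchy_average_le:
  assumes h: "selfadjoint h" "exp_growth h c" "exp_growth (- h) c" and "c \<ge> 0" "R \<ge> 0" "N > 0"
  shows "norm (cauchy_average N n R h) \<le> exp (c * R)"
proof -
  have "norm (of_complex ((root_unity N ^ (N - n)) ^ j / of_nat N) * exp (of_complex (of_real R * root_unity N ^ j) * h))
      \<le> exp (c * R) / N" for j
  proof -
    have "\<bar>Re (of_real R * root_unity N ^ j)\<bar> * c \<le> c * R"
      using abs_Re_le_cmod[of "of_real R * root_unity N ^ j"] \<open>R \<ge> 0\<close> \<open>c \<ge> 0\<close>
      by (simp add: norm_mult norm_power mult.commute[of c] mult_right_mono)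
    then have "norm (exp (of_complex (of_real R * root_unity N ^ j) * h)) \<le> exp (c * R)"
      using norm_exp_of_complex_mult_le[OF h] by (meson exp_le_cancel_iff order_trans)
    moreover have "norm (of_complex ((root_unity N ^ (N - n)) ^ j / of_nat N) * exp (of_complex (of_real R * root_unity N ^ j) * h))
        \<le> norm (exp (of_complex (of_real R * root_unity N ^ j) * h)) / N"
      using norm_mult_ineq[of "of_complex ((root_unity N ^ (N - n)) ^ j / of_nat N)"]
      by (simp add: norm_divide norm_power)
    ultimately show ?thesis by (meson divide_right_mono of_nat_0_le_iff order_trans)
  qed
  then have "norm (cauchy_average N n R h) \<le> (\<Sum>j<N. exp (c * R) / N)"
    unfolding cauchy_average_def by (intro order_trans[OF norm_sum sum_mono])
  also have "\<dots> = exp (c * R)" using \<open>N > 0\<close> by simp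
  finally show ?thesis .
qed

lemma norm_cauchy_average_minus_coeff_le:
  assumes "n < N" "R \<ge> 0"
  shows "norm (cauchy_average N n R h - (R ^ n / fact n) *\<^sub>R h ^ n)
    \<le> (\<Sum>m. (R * norm h) ^ (m + N) / fact (m + N))"
proof -
  define \<zeta> where "\<zeta> = root_unity N"
  define cc where "cc m = of_real (R ^ m / fact m) / of_nat N * (\<Sum>j<N. (\<zeta> ^ (N - n)) ^ j * (\<zeta> ^ j) ^ m)" for m
  have "(\<lambda>m. \<Sum>j<N. of_complex ((\<zeta> ^ (N - n)) ^ j / of_nat N)
      * (of_complex ((of_real R * \<zeta> ^ j) ^ m /\<^sub>R fact m) * h ^ m)) sums cauchy_average N n R h"
    unfolding cauchy_average_def \<zeta>_def by (intro sums_sum sums_mult exp_of_complex_mult_sums)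
  moreover have "(\<Sum>j<N. of_complex ((\<zeta> ^ (N - n)) ^ j / of_nat N)
      * (of_complex ((of_real R * \<zeta> ^ j) ^ m /\<^sub>R fact m) * h ^ m)) = of_complex (cc m) * h ^ m" for m
    by (simp add: cc_def of_complex_sum sum_distrib_left sum_distrib_right
        power_mult_distrib scaleR_conv_of_real field_simps flip: of_complex_mult)
  ultimately have series: "(\<lambda>m. of_complex (cc m) * h ^ m) sums cauchy_average N n R h" by simp
  have cc_n: "cc n = of_real (R ^ n / fact n)" and cc_0: "\<And>m. m < N \<Longrightarrow> m \<noteq> n \<Longrightarrow> cc m = 0"
    using roots_of_unity_orthogonal[OF \<open>n < N\<close>] \<open>n < N\<close> by (simp_all add: cc_def \<zeta>_def)
  have "cmod (\<Sum>j<N. (\<zeta> ^ (N - n)) ^ j * (\<zeta> ^ j) ^ m) \<le> N" for m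
    using norm_sum[of "\<lambda>j. (\<zeta> ^ (N - n)) ^ j * (\<zeta> ^ j) ^ m" "{..<N}"]
    by (simp add: \<zeta>_def norm_mult norm_power)
  then have cc_le: "cmod (cc m) \<le> R ^ m / fact m" for m
  proof -
    have "cmod (cc m) = R ^ m / fact m / N * cmod (\<Sum>j<N. (\<zeta> ^ (N - n)) ^ j * (\<zeta> ^ j) ^ m)"
      using \<open>R \<ge> 0\<close> by (simp add: cc_def norm_mult norm_divide norm_power)
    also have "\<dots> \<le> R ^ m / fact m / N * N"
      by (rule mult_left_mono) (use \<open>R \<ge> 0\<close> \<open>cmod (\<Sum>j<N. _) \<le> N\<close> in simp_all)
    finally show ?thesis using \<open>n < N\<close> by simp
  qed
  have "of_complex (cc n) = (of_real (R ^ n / fact n) :: 'a)"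
    by (simp only: cc_n of_complex_of_real)
  then have "(\<Sum>m<N. of_complex (cc m) * h ^ m) = (R ^ n / fact n) *\<^sub>R h ^ n"
    using \<open>n < N\<close> cc_0 by (subst sum.remove[of _ n]) (auto intro!: sum.neutral simp: scaleR_conv_of_real)
  then have "(\<lambda>m. of_complex (cc (m + N)) * h ^ (m + N)) sums (cauchy_average N n R h - (R ^ n / fact n) *\<^sub>R h ^ n)"
    using sums_split_initial_segment[OF series, of N] by simp
  moreover have "norm (of_complex (cc m) * h ^ m) \<le> (R * norm h) ^ m / fact m" for m
  proof -
    have "norm (of_complex (cc m) * h ^ m) \<le> cmod (cc m) * norm h ^ m"
      by (metis norm_mult_ineq norm_of_complex norm_power_ineq mult_left_mono norm_ge_zero order_trans)
    also have "\<dots> \<le> R ^ m / fact m * norm h ^ m" by (rule mult_right_mono[OF cc_le]) simp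
    finally show ?thesis by (simp add: power_mult_distrib)
  qed
  moreover have "summable (\<lambda>m. (R * norm h) ^ (m + N) / fact (m + N))"
    using summable_ignore_initial_segment[OF summable_exp_generic[of "R * norm h"]]
    by (simp add: divide_inverse mult.commute)
  ultimately show ?thesis
    using norm_suminf_le[of "\<lambda>m. of_complex (cc (m + N)) * h ^ (m + N)"] by (simp add: sums_iff)
qed

lemma exp_growth_cauchy_estimate:
  fixes h :: "'a::comm_cstar_algebra"
  assumes h: "selfadjoint h" "exp_growth h c" "exp_growth (- h) c" and "c \<ge> 0" "R \<ge> 0"
  shows "R ^ n / fact n * norm (h ^ n) \<le> exp (c * R)"
proof (rule field_le_epsilon)
  fix \<epsilon> :: real
  assume "\<epsilon> > 0"
  have "summable (\<lambda>m. (R * norm h) ^ m / fact m)"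
    using summable_exp_generic[of "R * norm h"] by (simp add: divide_inverse mult.commute)
  then obtain N0 where N0: "\<And>N. N \<ge> N0 \<Longrightarrow> norm (\<Sum>m. (R * norm h) ^ (m + N) / fact (m + N)) < \<epsilon>"
    using suminf_exist_split[OF \<open>\<epsilon> > 0\<close>] by blast
  define N where "N = max N0 (Suc n)"
  have "n < N" "N0 \<le> N" by (simp_all add: N_def)
  have "R ^ n / fact n * norm (h ^ n) = norm ((R ^ n / fact n) *\<^sub>R h ^ n)"
    using \<open>R \<ge> 0\<close> by simp
  also have "\<dots> \<le> norm (cauchy_average N n R h) + norm (cauchy_average N n R h - (R ^ n / fact n) *\<^sub>R h ^ n)"
    using norm_triangle_sub[of "(R ^ n / fact n) *\<^sub>R h ^ n" "cauchy_average N n R h"]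
    by (simp add: norm_minus_commute)
  also have "\<dots> \<le> exp (c * R) + \<epsilon>"
    using norm_cauchy_average_le[OF h \<open>c \<ge> 0\<close> \<open>R \<ge> 0\<close>, of N n] \<open>n < N\<close>
      norm_cauchy_average_minus_coeff_le[OF \<open>n < N\<close> \<open>R \<ge> 0\<close>, of h] N0[OF \<open>N0 \<le> N\<close>]
    by simp
  finally show "R ^ n / fact n * norm (h ^ n) \<le> exp (c * R) + \<epsilon>" .
qed

lemma exp_one_mult_power_le: "n \<ge> 1 \<Longrightarrow> exp 1 * real n ^ (n + 1) \<le> (real n + 1) ^ (n + 1)"
proof -
  assume "n \<ge> 1"
  then have pos: "real n > 0" by simp
  have "exp (- (1 / (real n + 1))) \<ge> real n / (real n + 1)"
    using exp_ge_add_one_self[of "- (1 / (real n + 1))"] pos by (simp add: field_simps)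
  then have "exp (1 / (real n + 1)) \<le> (real n + 1) / real n"
    using pos by (simp add: exp_minus field_simps)
  then have "exp (1 / (real n + 1)) ^ (n + 1) \<le> ((real n + 1) / real n) ^ (n + 1)"
    by (intro power_mono) simp_all
  also have "exp (1 / (real n + 1)) ^ (n + 1) = exp (of_nat (n + 1) * (1 / (real n + 1)))"
    by (rule exp_of_nat_mult[symmetric])
  also have "\<dots> = exp 1" by simp
  finally show ?thesis using pos by (simp add: power_divide field_simps)
qed

lemma exp_mult_fact_le: "n \<ge> 1 \<Longrightarrow> exp (real n - 1) * fact n \<le> real n ^ (n + 1)"
proof (induct n rule: dec_induct)
  case (step n)
  have "exp (real (Suc n) - 1) * fact (Suc n) = exp 1 * (exp (real n - 1) * fact n) * (real n + 1)"
    by (simp add: exp_diff exp_add field_simps)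
  also have "\<dots> \<le> exp 1 * real n ^ (n + 1) * (real n + 1)"
    using step by (intro mult_right_mono mult_left_mono) simp_all
  also have "\<dots> \<le> (real n + 1) ^ (n + 1) * (real n + 1)"
    using exp_one_mult_power_le[OF step(1)] by (intro mult_right_mono) simp_all
  finally show ?case by (simp add: add.commute mult.commute)
qed simp

lemma exists_exp_one_mult_pow2_less:
  fixes x :: real
  assumes "x > 1"
  shows "\<exists>k. exp 1 * 2 ^ k < x ^ 2 ^ k"
proof -
  have "(\<lambda>n. real n / x ^ n) \<longlonglongrightarrow> 0" using lim_n_over_pown[of x] assms by simp
  then have "eventually (\<lambda>n. real n / x ^ n < 1 / 3) sequentially"
    by (rule order_tendstoD(2)) simp
  then obtain N where N: "\<And>n. n \<ge> N \<Longrightarrow> real n / x ^ n < 1 / 3"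
    unfolding eventually_sequentially by blast
  have "real (2 ^ N) / x ^ 2 ^ N < 1 / 3" using N[of "2 ^ N"] less_exp[of N] by simp
  then have "3 * 2 ^ N < x ^ 2 ^ N" using assms by (simp add: field_simps)
  moreover have "exp 1 * 2 ^ N \<le> 3 * (2::real) ^ N" using exp_le by simp
  ultimately show ?thesis by (intro exI[of _ N]) linarith
qed

lemma norm_power2_selfadjoint:
  assumes "selfadjoint h"
  shows "norm (h ^ 2 ^ k) = norm h ^ 2 ^ k"
proof (induct k)
  case (Suc k)
  have "h ^ 2 ^ Suc k = cstar (h ^ 2 ^ k) * h ^ 2 ^ k"
    using assms by (simp add: selfadjoint_def power_mult[symmetric] mult_2 power_add)
  then have "norm (h ^ 2 ^ Suc k) = norm (h ^ 2 ^ k) ^ 2" by (simp only: cstar_identity)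
  then show ?case by (simp add: Suc mult.commute flip: power_mult)
qed simp

lemma exp_growth_mono: "exp_growth h a \<Longrightarrow> a \<le> b \<Longrightarrow> exp_growth h b"
  unfolding exp_growth_def by (meson exp_le_cancel_iff mult_left_mono order_trans)

lemma norm_le_of_exp_growth:
  fixes h :: "'a::comm_cstar_algebra"
  assumes h: "selfadjoint h" "exp_growth h c" "exp_growth (- h) c"
  shows "norm h \<le> c"
proof -
  have "norm (exp h) \<le> exp c" "norm (exp (- h)) \<le> exp c"
    using h(2,3) unfolding exp_growth_def by (metis mult_1 order_refl scaleR_one zero_le_one)+
  then have "norm (exp h * exp (- h)) \<le> exp c * exp c"
    by (meson norm_ge_zero norm_mult_ineq mult_mono order_trans)
  then have "1 \<le> exp c * exp c" by (simp add: exp_minus_inverse)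
  then have "1 \<le> exp (c + c)" by (simp only: exp_add)
  then have "0 \<le> c" by simp
  have positive_case: "norm h \<le> c" if "c > 0" "exp_growth h c" "exp_growth (- h) c" for c
  proof (rule ccontr)
    assume "\<not> norm h \<le> c"
    then have "norm h / c > 1" using \<open>c > 0\<close> by simp
    then obtain k where k: "exp 1 * 2 ^ k < (norm h / c) ^ 2 ^ k"
      using exists_exp_one_mult_pow2_less by blast
    define n :: nat where "n = 2 ^ k"
    have "n \<ge> 1" by (simp add: n_def)
    have "(n / c) ^ n / fact n * norm (h ^ n) \<le> exp (c * (n / c))"
      by (rule exp_growth_cauchy_estimate[OF h(1) that(2,3)]) (use \<open>c > 0\<close> \<open>n \<ge> 1\<close> in auto)
    then have "real n ^ n * (norm h / c) ^ n \<le> exp (real n) * fact n"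
      using \<open>c > 0\<close> by (simp add: n_def norm_power2_selfadjoint[OF h(1)] power_divide field_simps)
    also have "\<dots> = exp (real n - 1) * fact n * exp 1" by (simp flip: exp_add)
    also have "\<dots> \<le> real n ^ (n + 1) * exp 1"
      using exp_mult_fact_le[OF \<open>n \<ge> 1\<close>] by simp
    finally have "(norm h / c) ^ n \<le> exp 1 * n"
      using \<open>n \<ge> 1\<close> by (simp add: mult.commute)
    then show False using k by (simp add: n_def)
  qed
  show ?thesis
  proof (rule field_le_epsilon)
    fix e :: real
    assume "e > 0"
    then show "norm h \<le> c + e"
      using \<open>0 \<le> c\<close> h(2,3) by (intro positive_case) (auto intro: exp_growth_mono)
  qed
qed

section \<open>Positive elements\<close>

definition is_positive :: "'a::comm_cstar_algebra \<Rightarrow> bool" where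
  "is_positive p \<longleftrightarrow> selfadjoint p \<and> exp_growth (- p) 0"

lemma exp_growth_add: "exp_growth h a \<Longrightarrow> exp_growth k b \<Longrightarrow> exp_growth (h + k) (a + b)"
  unfolding exp_growth_def
proof (intro allI impI)
  fix t :: real
  assume h: "\<forall>t\<ge>0. norm (exp (t *\<^sub>R h)) \<le> exp (t * a)" and k: "\<forall>t\<ge>0. norm (exp (t *\<^sub>R k)) \<le> exp (t * b)"
    and "t \<ge> 0"
  have "norm (exp (t *\<^sub>R (h + k))) \<le> norm (exp (t *\<^sub>R h)) * norm (exp (t *\<^sub>R k))"
    by (simp add: scaleR_add_right exp_add_commutative norm_mult_ineq)
  also have "\<dots> \<le> exp (t * a) * exp (t * b)"
    using h k \<open>t \<ge> 0\<close> by (intro mult_mono) auto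
  finally show "norm (exp (t *\<^sub>R (h + k))) \<le> exp (t * (a + b))"
    by (simp add: distrib_left exp_add)
qed

lemma exp_growth_norm: "exp_growth h (norm h)"
  unfolding exp_growth_def using norm_exp by (metis abs_of_nonneg norm_scaleR)

lemma is_positive_add: "is_positive p \<Longrightarrow> is_positive q \<Longrightarrow> is_positive (p + q)"
  unfolding is_positive_def using exp_growth_add[of "- p" 0 "- q" 0]
  by (simp add: selfadjoint_add add.commute)

lemma is_positive_0: "is_positive 0"
  by (simp add: is_positive_def selfadjoint_def exp_growth_def)

lemma is_positive_scaleR:
  assumes "is_positive p" "r \<ge> 0"
  shows "is_positive (r *\<^sub>R p)"
proof -
  have "norm (exp (t *\<^sub>R - (r *\<^sub>R p))) \<le> exp (t * 0)" if "t \<ge> 0" for t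
    using assms(1)[unfolded is_positive_def exp_growth_def, THEN conjunct2, rule_format, of "t * r"]
      assms(2) that by simp
  then show ?thesis using assms(1) by (simp add: is_positive_def exp_growth_def selfadjoint_scaleR)
qed

lemma is_positive_sum: "(\<And>i. i \<in> I \<Longrightarrow> is_positive (f i)) \<Longrightarrow> is_positive (sum f I)"
  by (induct I rule: infinite_finite_induct) (auto simp: is_positive_add is_positive_0)

lemma is_positive_limit:
  assumes "\<And>n. is_positive (f n)" "f \<longlonglongrightarrow> p"
  shows "is_positive p"
  unfolding is_positive_def exp_growth_def
proof (intro conjI allI impI)
  have "(\<lambda>n. cstar (f n)) \<longlonglongrightarrow> cstar p" by (rule tendsto_cstar[OF assms(2)])
  moreover have "(\<lambda>n. cstar (f n)) = f" using assms(1) by (auto simp: is_positive_def selfadjoint_def)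
  ultimately show "selfadjoint p" using LIMSEQ_unique assms(2) by (auto simp: selfadjoint_def)
  fix t :: real
  assume "t \<ge> 0"
  have "(\<lambda>n. norm (exp (t *\<^sub>R - f n))) \<longlonglongrightarrow> norm (exp (t *\<^sub>R - p))"
    by (intro tendsto_norm tendsto_exp_commutative tendsto_scaleR tendsto_const tendsto_minus assms(2))
  moreover have "norm (exp (t *\<^sub>R - f n)) \<le> exp (t * 0)" for n
    using assms(1) \<open>t \<ge> 0\<close> by (simp add: is_positive_def exp_growth_def)
  ultimately show "norm (exp (t *\<^sub>R - p)) \<le> exp (t * 0)"
    by (intro LIMSEQ_le_const2) auto
qed

lemma is_positive_suminf: "(\<And>n. is_positive (f n)) \<Longrightarrow> summable f \<Longrightarrow> is_positive (suminf f)"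
  by (rule is_positive_limit[of "\<lambda>n. \<Sum>i<n. f i"]) (auto intro: is_positive_sum summable_LIMSEQ)

lemma norm_le_norm_add_positive:
  assumes "is_positive p" "is_positive q"
  shows "norm p \<le> norm (p + q)"
proof (rule norm_le_of_exp_growth)
  show "selfadjoint p" using assms by (simp add: is_positive_def)
  have "exp_growth ((p + q) + - q) (norm (p + q) + 0)"
    using assms(2) by (intro exp_growth_add exp_growth_norm) (simp add: is_positive_def)
  then show "exp_growth p (norm (p + q))" by simp
  show "exp_growth (- p) (norm (p + q))"
    using assms by (auto simp: is_positive_def intro: exp_growth_mono)
qed

lemma norm_diff_le_norm_add_positive:
  assumes "is_positive p" "is_positive q"
  shows "norm (p - q) \<le> norm (p + q)"
proof (rule norm_le_of_exp_growth)
  show "selfadjoint (p - q)" using assms by (simp add: is_positive_def selfadjoint_diff)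
  have "exp_growth ((p + q) + - (2 *\<^sub>R q)) (norm (p + q) + 0)"
    using is_positive_scaleR[OF assms(2), of 2]
    by (intro exp_growth_add exp_growth_norm) (simp add: is_positive_def)
  then show "exp_growth (p - q) (norm (p + q))" by (simp add: scaleR_2)
  have "exp_growth ((p + q) + - (2 *\<^sub>R p)) (norm (p + q) + 0)"
    using is_positive_scaleR[OF assms(1), of 2]
    by (intro exp_growth_add exp_growth_norm) (simp add: is_positive_def)
  then show "exp_growth (- (p - q)) (norm (p + q))" by (simp add: scaleR_2)
qed

lemma norm_cosh_minus_taylor_le:
  fixes w :: "'a::{real_normed_algebra_1,banach}"
  assumes "norm w \<le> 1"
  shows "norm ((1/2) *\<^sub>R (exp w + exp (- w)) - (1 + (1/2) *\<^sub>R (w * w))) \<le> 3 * norm w ^ 3"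
proof -
  define E1 where "E1 = exp w - (\<Sum>m<3. w ^ m /\<^sub>R fact m)"
  define E2 where "E2 = exp (- w) - (\<Sum>m<3. (- w) ^ m /\<^sub>R fact m)"
  have "(\<Sum>m<3. w ^ m /\<^sub>R fact m) + (\<Sum>m<3. (- w) ^ m /\<^sub>R fact m) = 2 *\<^sub>R (1 + (1/2) *\<^sub>R (w * w))"
    by (simp add: numeral_3_eq_3 power2_eq_square scaleR_2 add_ac)
  then have "E1 + E2 = (exp w + exp (- w)) - 2 *\<^sub>R (1 + (1/2) *\<^sub>R (w * w))"
    unfolding E1_def E2_def by (simp add: algebra_simps)
  then have "(1/2) *\<^sub>R (exp w + exp (- w)) - (1 + (1/2) *\<^sub>R (w * w)) = (1/2) *\<^sub>R (E1 + E2)"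
    by (simp add: scaleR_diff_right)
  moreover have "norm E1 \<le> 3 * norm w ^ 3" "norm E2 \<le> 3 * norm w ^ 3"
    using norm_exp_minus_taylor_le_small[of w 3] norm_exp_minus_taylor_le_small[of "- w" 3] assms
    by (simp_all add: E1_def E2_def)
  ultimately show ?thesis using norm_triangle_ineq[of E1 E2] by simp
qed

text \<open>Up to an error of order norm y ^ 3, the element exp(-y^2/2) is the average of the
  unitaries exp(iy) and exp(-iy); writing exp(-t x^2) as a high power of such an element
  removes the error.\<close>

lemma norm_exp_neg_half_square_le:
  fixes y :: "'a::comm_cstar_algebra"
  assumes y: "selfadjoint y" "norm y \<le> 1"
  shows "norm (exp (- ((1/2) *\<^sub>R (y * y)))) \<le> 1 + 4 * norm y ^ 3"
proof -
  define J where "J = of_complex \<i> * y"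
  define u where "u = (1/2) *\<^sub>R (y * y)"
  define C where "C = (1/2) *\<^sub>R (exp J + exp (- J))"
  have "norm (exp J) = 1" "norm (exp (- J)) = 1"
    using norm_exp_imag_selfadjoint[of y] norm_exp_imag_selfadjoint[of "- y"] y(1)
    by (simp_all add: J_def selfadjoint_def)
  then have "norm C \<le> 1" unfolding C_def using norm_triangle_ineq[of "exp J" "exp (- J)"] by simp
  have "J * J = (of_complex \<i> * of_complex \<i>) * (y * y)" by (simp only: J_def ac_simps)
  then have JJ: "1 + (1/2) *\<^sub>R (J * J) = 1 - u" by (simp add: u_def of_complex_i_squared)
  have "norm J \<le> norm y" using norm_mult_ineq[of "of_complex \<i>" y] by (simp add: J_def)
  then have "norm (C - (1 - u)) \<le> 3 * norm J ^ 3"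
    using norm_cosh_minus_taylor_le[of J] y(2) unfolding C_def JJ[symmetric] by simp
  also have "\<dots> \<le> 3 * norm y ^ 3" using \<open>norm J \<le> norm y\<close> by (simp add: power_mono)
  finally have "norm (C - (1 - u)) \<le> 3 * norm y ^ 3" .
  have "norm u \<le> norm y ^ 2 / 2"
    by (simp add: u_def power2_eq_square norm_mult_ineq)
  moreover have "norm y ^ 2 \<le> 1" using y(2) by (simp add: power_le_one)
  ultimately have "norm (exp (- u) - (1 - u)) \<le> 3 * norm u ^ 2"
    using norm_exp_minus_taylor_le_small[of "- u" 2] by (simp add: numeral_2_eq_2)
  also have "\<dots> \<le> 3 * (norm y ^ 2 / 2) ^ 2"
    using \<open>norm u \<le> norm y ^ 2 / 2\<close> by (simp add: power_mono)
  also have "\<dots> = 3 / 4 * norm y ^ 4" by (simp add: power_divide flip: power_mult)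
  also have "\<dots> \<le> norm y ^ 3"
  proof -
    have "norm y ^ 4 \<le> norm y ^ 3" using y(2) by (intro power_decreasing) simp_all
    moreover have "0 \<le> norm y ^ 4" by simp
    ultimately show ?thesis by linarith
  qed
  finally have "norm (exp (- u) - (1 - u)) \<le> norm y ^ 3" .
  moreover have "norm (exp (- u)) \<le> norm (C - (C - (1 - u))) + norm (exp (- u) - (1 - u))"
    using norm_triangle_ineq[of "C - (C - (1 - u))" "exp (- u) - (1 - u)"] by simp
  moreover have "norm (C - (C - (1 - u))) \<le> norm C + norm (C - (1 - u))"
    by (rule norm_triangle_ineq4)
  ultimately show ?thesis
    using \<open>norm C \<le> 1\<close> \<open>norm (C - (1 - u)) \<le> 3 * norm y ^ 3\<close> unfolding u_def by simp
qed

lemma norm_exp_neg_square_le: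
  fixes x :: "'a::comm_cstar_algebra"
  assumes "selfadjoint x" "t \<ge> 0"
  defines "a \<equiv> sqrt (2 * t) * norm x"
  assumes "a \<le> 2 ^ j"
  shows "norm (exp (t *\<^sub>R - (x * x))) \<le> exp (4 * a ^ 3 / 2 ^ j)"
proof -
  define y where "y = (sqrt (2 * t) / 2 ^ j) *\<^sub>R x"
  have "norm y = a / 2 ^ j" using assms(2) by (simp add: y_def a_def)
  then have "norm y \<le> 1" using assms(4) by simp
  have "real (4 ^ j) * ((1/2) * (sqrt (2 * t) / 2 ^ j)\<^sup>2) = t"
    using assms(2) by (simp add: power_divide power2_eq_square flip: power_mult_distrib)
  then have "t *\<^sub>R - (x * x) = real (4 ^ j) *\<^sub>R - ((1/2) *\<^sub>R (y * y))"
    by (simp add: y_def power2_eq_square ac_simps)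
  then have "t *\<^sub>R - (x * x) = of_nat (4 ^ j) * - ((1/2) *\<^sub>R (y * y))"
    by (simp only: scaleR_conv_of_real of_real_of_nat_eq)
  then have "norm (exp (t *\<^sub>R - (x * x))) = norm (exp (- ((1/2) *\<^sub>R (y * y))) ^ 4 ^ j)"
    by (simp only: exp_of_nat_mult_commutative)
  also have "\<dots> \<le> norm (exp (- ((1/2) *\<^sub>R (y * y)))) ^ 4 ^ j"
    by (rule norm_power_ineq)
  also have "\<dots> \<le> (1 + 4 * norm y ^ 3) ^ 4 ^ j"
    using assms \<open>norm y \<le> 1\<close>
    by (intro power_mono norm_exp_neg_half_square_le) (simp_all add: y_def selfadjoint_scaleR)
  also have "\<dots> \<le> exp (4 * norm y ^ 3) ^ 4 ^ j"
    by (intro power_mono exp_ge_add_one_self) simp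
  also have "\<dots> = exp (4 * a ^ 3 / 2 ^ j)"
  proof -
    have "(4::real) ^ j = 2 ^ j * 2 ^ j" by (simp flip: power_mult_distrib)
    then show ?thesis
      by (simp add: \<open>norm y = a / 2 ^ j\<close> power_divide power3_eq_cube field_simps flip: exp_of_nat_mult)
  qed
  finally show ?thesis .
qed

lemma exp_growth_neg_square:
  assumes "selfadjoint x"
  shows "exp_growth (- (x * x)) 0"
  unfolding exp_growth_def
proof (intro allI impI)
  fix t :: real
  assume "t \<ge> 0"
  define a where "a = sqrt (2 * t) * norm x"
  obtain N where "a < 2 ^ N" using real_arch_pow[of 2 a] by auto
  then have "eventually (\<lambda>j. a \<le> 2 ^ j) sequentially"
    unfolding eventually_sequentially
    by (intro exI[of _ N] allI impI order_trans[OF less_imp_le power_increasing]) simp_all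
  then have "eventually (\<lambda>j. norm (exp (t *\<^sub>R - (x * x))) \<le> exp (4 * a ^ 3 / 2 ^ j)) sequentially"
    by (rule eventually_mono) (use norm_exp_neg_square_le[OF assms \<open>t \<ge> 0\<close>] a_def in simp)
  moreover have "(\<lambda>j. exp (4 * a ^ 3 / 2 ^ j)) \<longlonglongrightarrow> exp 0"
    by (intro tendsto_exp LIMSEQ_divide_realpow_zero) simp
  ultimately show "norm (exp (t *\<^sub>R - (x * x))) \<le> exp (t * 0)"
    by (simp add: tendsto_lowerbound)
qed

lemma is_positive_square: "selfadjoint x \<Longrightarrow> is_positive (x * x)"
  by (simp add: is_positive_def selfadjoint_mult exp_growth_neg_square)

lemma is_positive_cstar_mult: "is_positive (cstar c * (c::'a::comm_cstar_algebra))"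
proof -
  define x :: 'a where "x = c + cstar c"
  define y :: 'a where "y = of_complex \<i> * (c - cstar c)"
  have "selfadjoint x" "selfadjoint y"
    by (simp_all add: selfadjoint_def x_def y_def cstar_add algebra_simps)
  have "y * y = (of_complex \<i> * of_complex \<i>) * ((c - cstar c) * (c - cstar c))"
    by (simp only: y_def ac_simps)
  then have "x * x + y * y = 4 *\<^sub>R (cstar c * c)"
    by (simp add: x_def of_complex_i_squared scaleR_conv_of_real algebra_simps)
  then have "cstar c * c = (1/4) *\<^sub>R (x * x + y * y)" by simp
  then show ?thesis
    using \<open>selfadjoint x\<close> \<open>selfadjoint y\<close>
    by (simp add: is_positive_scaleR is_positive_add is_positive_square)
qed

section \<open>Finite partial inner products\<close>

definition hinner_on :: "nat set \<Rightarrow> (nat \<Rightarrow> 'a::comm_cstar_algebra) \<Rightarrow> (nat \<Rightarrow> 'a) \<Rightarrow> 'a" where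
  "hinner_on I x y = (\<Sum>k\<in>I. cstar (x k) * y k)"

lemma is_positive_hinner_on: "is_positive (hinner_on I x x)"
  unfolding hinner_on_def by (rule is_positive_sum) (rule is_positive_cstar_mult)

lemma norm_hinner_on_mono:
  assumes "finite J" "I \<subseteq> J"
  shows "norm (hinner_on I x x) \<le> norm (hinner_on J x x)"
proof -
  have "hinner_on J x x = hinner_on I x x + hinner_on (J - I) x x"
    unfolding hinner_on_def using assms by (simp add: sum.subset_diff)
  then show ?thesis by (simp add: norm_le_norm_add_positive is_positive_hinner_on)
qed

lemma le_two_sqrt_mult:
  fixes S A B :: real
  assumes le: "\<And>s. s > 0 \<Longrightarrow> S \<le> s * A + B / s" and "A \<ge> 0" "B \<ge> 0"
  shows "S \<le> 2 * sqrt (A * B)"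
proof (cases "A > 0 \<and> B > 0")
  case True
  then have "sqrt B / sqrt A * A + B / (sqrt B / sqrt A) = 2 * sqrt (A * B)"
    by (simp add: field_simps real_sqrt_mult)
  then show ?thesis using le[of "sqrt B / sqrt A"] True by simp
next
  case False
  show ?thesis
  proof (rule ccontr)
    assume "\<not> ?thesis"
    then have "S > 0" using False \<open>A \<ge> 0\<close> \<open>B \<ge> 0\<close> by auto
    show False
    proof (cases "A = 0")
      case True
      have "S \<le> S * (B / (2 * (B + 1)))"
        using le[of "2 * (B + 1) / S"] True \<open>S > 0\<close> \<open>B \<ge> 0\<close> by (simp add: ac_simps)
      also have "\<dots> < S * 1" using \<open>S > 0\<close> \<open>B \<ge> 0\<close> by (intro mult_strict_left_mono) auto
      finally show False by simp
    next
      case False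
      then have "B = 0" using \<open>\<not> (A > 0 \<and> B > 0)\<close> \<open>A \<ge> 0\<close> \<open>B \<ge> 0\<close> by simp
      have "S \<le> S * (A / (2 * (A + 1)))"
        using le[of "S / (2 * (A + 1))"] \<open>B = 0\<close> \<open>S > 0\<close> \<open>A \<ge> 0\<close> by (simp add: ac_simps)
      also have "\<dots> < S * 1" using \<open>S > 0\<close> \<open>A \<ge> 0\<close> by (intro mult_strict_left_mono) auto
      finally show False by simp
    qed
  qed
qed

lemma norm_hinner_on_sym_le:
  "norm (hinner_on I x y + hinner_on I y x) \<le> 2 * sqrt (norm (hinner_on I x x) * norm (hinner_on I y y))"
proof (rule le_two_sqrt_mult)
  fix s :: real
  assume "s > 0"
  define r where "r = sqrt s"
  have "r \<noteq> 0" "r * r = s" using \<open>s > 0\<close> by (auto simp: r_def)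
  define u where "u k = r *\<^sub>R x k + (1 / r) *\<^sub>R y k" for k
  define v where "v k = r *\<^sub>R x k - (1 / r) *\<^sub>R y k" for k
  have diff: "cstar (u k) * u k - cstar (v k) * v k = 2 *\<^sub>R (cstar (x k) * y k + cstar (y k) * x k)" for k
    using \<open>r \<noteq> 0\<close> by (simp add: u_def v_def cstar_add algebra_simps scaleR_2)
  have polar: "cstar (p + q) * (p + q) + cstar (p - q) * (p - q) = 2 *\<^sub>R (cstar p * p + cstar q * q)"
    for p q :: 'a
    by (simp add: cstar_add algebra_simps scaleR_2)
  have sum: "cstar (u k) * u k + cstar (v k) * v k
      = 2 *\<^sub>R (s *\<^sub>R (cstar (x k) * x k) + (1 / s) *\<^sub>R (cstar (y k) * y k))" for k
    using polar[of "r *\<^sub>R x k" "(1 / r) *\<^sub>R y k"] by (simp add: u_def v_def flip: \<open>r * r = s\<close>)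
  have "hinner_on I u u - hinner_on I v v = (\<Sum>k\<in>I. cstar (u k) * u k - cstar (v k) * v k)"
    by (simp add: hinner_on_def sum_subtractf)
  also have "\<dots> = 2 *\<^sub>R (hinner_on I x y + hinner_on I y x)"
    by (simp add: diff hinner_on_def scaleR_add_right scaleR_sum_right sum.distrib)
  finally have D: "hinner_on I u u - hinner_on I v v = 2 *\<^sub>R (hinner_on I x y + hinner_on I y x)" .
  have "hinner_on I u u + hinner_on I v v = (\<Sum>k\<in>I. cstar (u k) * u k + cstar (v k) * v k)"
    by (simp add: hinner_on_def sum.distrib)
  also have "\<dots> = 2 *\<^sub>R (s *\<^sub>R hinner_on I x x + (1 / s) *\<^sub>R hinner_on I y y)"
    by (simp add: sum hinner_on_def scaleR_add_right scaleR_sum_right sum.distrib)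
  finally have P: "hinner_on I u u + hinner_on I v v = 2 *\<^sub>R (s *\<^sub>R hinner_on I x x + (1 / s) *\<^sub>R hinner_on I y y)" .
  have "norm (hinner_on I u u - hinner_on I v v) \<le> norm (hinner_on I u u + hinner_on I v v)"
    by (rule norm_diff_le_norm_add_positive) (rule is_positive_hinner_on)+
  then have "norm (hinner_on I x y + hinner_on I y x)
      \<le> norm (s *\<^sub>R hinner_on I x x + (1 / s) *\<^sub>R hinner_on I y y)"
    by (simp add: D P)
  also have "\<dots> \<le> s * norm (hinner_on I x x) + norm (hinner_on I y y) / s"
    using \<open>s > 0\<close> norm_triangle_ineq[of "s *\<^sub>R hinner_on I x x" "(1 / s) *\<^sub>R hinner_on I y y"] by simp
  finally show "norm (hinner_on I x y + hinner_on I y x)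
      \<le> s * norm (hinner_on I x x) + norm (hinner_on I y y) / s" .
qed simp_all

text \<open>Writing i for of_complex i, 2 cstar a * b is the symmetric expression for (a, b) plus
  i times the symmetric expression for (i a, b).\<close>

lemma norm_hinner_on_le:
  "norm (hinner_on I x y) \<le> 2 * sqrt (norm (hinner_on I x x) * norm (hinner_on I y y))"
proof -
  define i :: 'a where "i = of_complex \<i>"
  define x' where "x' k = i * x k" for k
  have i: "cstar i = - i" "i * i = -1" by (simp_all add: i_def of_complex_i_squared)
  have ii: "i * (i * z) = - z" for z using i(2) by (simp flip: mult.assoc)
  have "cstar (i * a) * (i * a) = - (i * i) * (cstar a * a)" for a
    by (simp add: i(1) algebra_simps)
  then have "cstar (i * a) * (i * a) = cstar a * a" for a by (simp add: i(2))
  then have "hinner_on I x' x' = hinner_on I x x" by (simp add: hinner_on_def x'_def)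
  have "cstar (i * a) * b = - (i * (cstar a * b))" "cstar b * (i * a) = i * (cstar b * a)" for a b
    by (simp_all only: cstar_mult_distrib i(1) mult.assoc minus_mult_left mult.left_commute[of "cstar b"])
  then have "i * (cstar (i * a) * b + cstar b * (i * a)) = cstar a * b - cstar b * a" for a b
    by (simp only: distrib_left mult_minus_right ii) simp
  then have "2 *\<^sub>R (cstar a * b) = (cstar a * b + cstar b * a) + i * (cstar (i * a) * b + cstar b * (i * a))" for a b
    by (simp add: scaleR_2)
  then have "2 *\<^sub>R hinner_on I x y = (hinner_on I x y + hinner_on I y x) + i * (hinner_on I x' y + hinner_on I y x')"
    by (simp add: hinner_on_def x'_def scaleR_sum_right sum_distrib_left distrib_left flip: sum.distrib)
  then have "2 * norm (hinner_on I x y)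
      \<le> norm (hinner_on I x y + hinner_on I y x) + norm i * norm (hinner_on I x' y + hinner_on I y x')"
    by (metis norm_mult_ineq norm_scaleR norm_triangle_le abs_numeral add_left_mono)
  also have "\<dots> \<le> 2 * sqrt (norm (hinner_on I x x) * norm (hinner_on I y y))
      + 2 * sqrt (norm (hinner_on I x x) * norm (hinner_on I y y))"
    using norm_hinner_on_sym_le[of I x y] norm_hinner_on_sym_le[of I x' y] \<open>hinner_on I x' x' = _\<close>
    by (simp add: i_def)
  finally show ?thesis by simp
qed

lemma sqrt_norm_hinner_on_add_le:
  "sqrt (norm (hinner_on I (x + y) (x + y))) \<le> sqrt (norm (hinner_on I x x)) + sqrt (norm (hinner_on I y y))"
proof -
  have "hinner_on I (x + y) (x + y) = hinner_on I x x + hinner_on I y y + (hinner_on I x y + hinner_on I y x)"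
    by (simp add: hinner_on_def cstar_add algebra_simps sum.distrib)
  then have "norm (hinner_on I (x + y) (x + y))
      \<le> norm (hinner_on I x x) + norm (hinner_on I y y) + norm (hinner_on I x y + hinner_on I y x)"
    by (metis norm_triangle_le norm_triangle_ineq add_right_mono)
  also have "\<dots> \<le> (sqrt (norm (hinner_on I x x)) + sqrt (norm (hinner_on I y y)))\<^sup>2"
    using norm_hinner_on_sym_le[of I x y] by (simp add: power2_eq_square algebra_simps real_sqrt_mult)
  finally show ?thesis by (simp add: real_le_lsqrt)
qed

section \<open>The Hilbert module H_A\<close>

lemma HA_iff: "x \<in> HA \<longleftrightarrow> summable (\<lambda>k. cstar (x k) * x k)"
  by (simp add: HA_def)

lemma summable_hinner:
  assumes x: "x \<in> HA" and y: "y \<in> HA"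
  shows "summable (\<lambda>k. cstar (x k) * y k)"
  unfolding summable_Cauchy
proof (intro allI impI)
  fix e :: real
  assume "e > 0"
  obtain N where N: "\<And>m n. m \<ge> N \<Longrightarrow> norm (hinner_on {m..<n} x x) < e / 2"
                    "\<And>m n. m \<ge> N \<Longrightarrow> norm (hinner_on {m..<n} y y) < e / 2"
  proof -
    obtain N1 where "\<forall>m\<ge>N1. \<forall>n. norm (hinner_on {m..<n} x x) < e / 2"
      using x \<open>e > 0\<close> unfolding HA_iff summable_Cauchy hinner_on_def by (meson half_gt_zero)
    moreover obtain N2 where "\<forall>m\<ge>N2. \<forall>n. norm (hinner_on {m..<n} y y) < e / 2"
      using y \<open>e > 0\<close> unfolding HA_iff summable_Cauchy hinner_on_def by (meson half_gt_zero)
    ultimately show thesis by (intro that[of "max N1 N2"]) auto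
  qed
  have "norm (hinner_on {m..<n} x y) < e" if "m \<ge> N" for m n
  proof -
    have "norm (hinner_on {m..<n} x x) * norm (hinner_on {m..<n} y y) < (e / 2) * (e / 2)"
      using N[OF that] by (intro mult_strict_mono') simp_all
    then have "sqrt (norm (hinner_on {m..<n} x x) * norm (hinner_on {m..<n} y y)) < sqrt ((e / 2) * (e / 2))"
      by (rule real_sqrt_less_mono)
    also have "sqrt ((e / 2) * (e / 2)) = e / 2" using \<open>e > 0\<close> by (simp only: real_sqrt_abs2 abs_of_pos half_gt_zero)
    finally have "sqrt (norm (hinner_on {m..<n} x x) * norm (hinner_on {m..<n} y y)) < e / 2" .
    then show ?thesis using norm_hinner_on_le[of "{m..<n}" x y] by linarith
  qed
  then show "\<exists>N. \<forall>m\<ge>N. \<forall>n. norm (\<Sum>k = m..<n. cstar (x k) * y k) < e"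
    unfolding hinner_on_def by blast
qed

lemma hinner_on_tendsto_hinner:
  "x \<in> HA \<Longrightarrow> y \<in> HA \<Longrightarrow> (\<lambda>n. hinner_on {..<n} x y) \<longlonglongrightarrow> hinner x y"
  unfolding hinner_on_def hinner_def by (intro summable_LIMSEQ summable_hinner)

lemma HA_add:
  assumes "x \<in> HA" "y \<in> HA"
  shows "x + y \<in> HA"
proof -
  have "summable (\<lambda>k. (cstar (x k) * x k + cstar (x k) * y k) + (cstar (y k) * x k + cstar (y k) * y k))"
    using assms by (intro summable_add summable_hinner)
  then show ?thesis by (simp add: HA_iff cstar_add algebra_simps)
qed

lemma HA_scale:
  assumes "x \<in> HA"
  shows "(\<lambda>k. c * x k) \<in> HA"
proof -
  have "summable (\<lambda>k. (cstar c * c) * (cstar (x k) * x k))"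
    using assms by (intro summable_mult) (simp add: HA_iff)
  then show ?thesis by (simp add: HA_iff ac_simps)
qed

lemma HA_scale_surj:
  assumes "b * c = 1" "y \<in> HA"
  shows "\<exists>x\<in>HA. (\<lambda>k. c * x k) = y"
proof
  show "(\<lambda>k. c * (b * y k)) = y" using assms(1) by (simp add: fun_eq_iff mult.assoc[symmetric] mult.commute[of c])
qed (rule HA_scale[OF assms(2)])

lemma HA_scaleR: "x \<in> HA \<Longrightarrow> (\<lambda>k. r *\<^sub>R x k) \<in> HA"
  using HA_scale[of x "of_real r"] by (simp add: scaleR_conv_of_real)

lemma HA_uminus: "x \<in> HA \<Longrightarrow> - x \<in> HA"
  by (simp add: HA_iff)

lemma HA_diff: "x \<in> HA \<Longrightarrow> y \<in> HA \<Longrightarrow> x - y \<in> HA"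
  unfolding diff_conv_add_uminus by (intro HA_add HA_uminus)

lemma HA_zero: "0 \<in> HA"
  by (simp add: HA_iff)

lemma hinner_add_left: "x \<in> HA \<Longrightarrow> y \<in> HA \<Longrightarrow> z \<in> HA \<Longrightarrow> hinner (x + y) z = hinner x z + hinner y z"
  unfolding hinner_def by (simp add: cstar_add distrib_right suminf_add summable_hinner)

lemma hinner_add_right: "x \<in> HA \<Longrightarrow> y \<in> HA \<Longrightarrow> z \<in> HA \<Longrightarrow> hinner x (y + z) = hinner x y + hinner x z"
  unfolding hinner_def by (simp add: distrib_left suminf_add summable_hinner)

lemma hinner_diff_left: "x \<in> HA \<Longrightarrow> y \<in> HA \<Longrightarrow> z \<in> HA \<Longrightarrow> hinner (x - y) z = hinner x z - hinner y z"
  unfolding hinner_def by (simp add: left_diff_distrib suminf_diff summable_hinner)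

lemma hinner_diff_right: "x \<in> HA \<Longrightarrow> y \<in> HA \<Longrightarrow> z \<in> HA \<Longrightarrow> hinner x (y - z) = hinner x y - hinner x z"
  unfolding hinner_def by (simp add: right_diff_distrib suminf_diff summable_hinner)

lemma hinner_scale_left: "x \<in> HA \<Longrightarrow> y \<in> HA \<Longrightarrow> hinner (\<lambda>k. c * x k) y = cstar c * hinner x y"
  unfolding hinner_def by (simp add: mult.assoc suminf_mult summable_hinner)

lemma hinner_scale_right: "x \<in> HA \<Longrightarrow> y \<in> HA \<Longrightarrow> hinner x (\<lambda>k. c * y k) = c * hinner x y"
  unfolding hinner_def by (simp add: mult.left_commute suminf_mult summable_hinner)

lemma hinner_scaleR_left: "x \<in> HA \<Longrightarrow> y \<in> HA \<Longrightarrow> hinner (\<lambda>k. r *\<^sub>R x k) y = r *\<^sub>R hinner x y"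
  using hinner_scale_left[of x y "of_real r"] by (simp add: scaleR_conv_of_real)

lemma hinner_scaleR_right: "x \<in> HA \<Longrightarrow> y \<in> HA \<Longrightarrow> hinner x (\<lambda>k. r *\<^sub>R y k) = r *\<^sub>R hinner x y"
  using hinner_scale_right[of x y "of_real r"] by (simp add: scaleR_conv_of_real)

lemma hnorm_zero: "hnorm 0 = 0"
  by (simp add: hnorm_def hinner_def)

lemma hnorm_nonneg: "hnorm x \<ge> 0"
  by (simp add: hnorm_def)

lemma hnorm_squared: "hnorm x ^ 2 = norm (hinner x x)"
  by (simp add: hnorm_def)

lemma hnorm_le: "a \<ge> 0 \<Longrightarrow> norm (hinner x x) \<le> a ^ 2 \<Longrightarrow> hnorm x \<le> a"
  by (simp add: hnorm_def real_sqrt_le_iff real_le_lsqrt)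

lemma norm_hinner_on_le_hinner:
  assumes "x \<in> HA" "finite I"
  shows "norm (hinner_on I x x) \<le> norm (hinner x x)"
proof -
  obtain n where "I \<subseteq> {..<n}" using \<open>finite I\<close> by (meson finite_nat_iff_bounded subsetI lessThan_iff)
  then have "norm (hinner_on I x x) \<le> norm (hinner_on {..<n} x x)" by (simp add: norm_hinner_on_mono)
  also have "\<dots> \<le> norm (hinner_on {..<n} x x + (\<Sum>k. cstar (x (k + n)) * x (k + n)))"
    using assms(1) unfolding HA_iff
    by (intro norm_le_norm_add_positive is_positive_hinner_on is_positive_suminf is_positive_cstar_mult
        summable_ignore_initial_segment)
  also have "hinner_on {..<n} x x + (\<Sum>k. cstar (x (k + n)) * x (k + n)) = hinner x x"
    using suminf_split_initial_segment[OF assms(1)[unfolded HA_iff], of n]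
    by (simp add: hinner_def hinner_on_def)
  finally show ?thesis .
qed

lemma norm_le_hnorm: "x \<in> HA \<Longrightarrow> norm (x k) \<le> hnorm x"
  using norm_hinner_on_le_hinner[of x "{k}"]
  by (simp add: hinner_on_def cstar_identity hnorm_def real_le_rsqrt)

lemma hnorm_eq_0: "x \<in> HA \<Longrightarrow> hnorm x = 0 \<Longrightarrow> x = 0"
  using norm_le_hnorm by (fastforce simp: fun_eq_iff)

lemma norm_hinner_sym_le:
  assumes "x \<in> HA" "y \<in> HA"
  shows "norm (hinner x y + hinner y x) \<le> 2 * hnorm x * hnorm y"
proof (rule tendsto_le[OF _ tendsto_const])
  show "(\<lambda>n. norm (hinner_on {..<n} x y + hinner_on {..<n} y x)) \<longlonglongrightarrow> norm (hinner x y + hinner y x)"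
    using assms by (intro tendsto_intros hinner_on_tendsto_hinner)
  have "norm (hinner_on {..<n} x y + hinner_on {..<n} y x) \<le> 2 * hnorm x * hnorm y" for n
  proof -
    have "norm (hinner_on {..<n} x y + hinner_on {..<n} y x)
        \<le> 2 * sqrt (norm (hinner_on {..<n} x x) * norm (hinner_on {..<n} y y))"
      by (rule norm_hinner_on_sym_le)
    also have "\<dots> \<le> 2 * sqrt (norm (hinner x x) * norm (hinner y y))"
      using assms by (intro mult_left_mono real_sqrt_le_mono mult_mono norm_hinner_on_le_hinner) simp_all
    finally show ?thesis by (simp add: hnorm_def real_sqrt_mult)
  qed
  then show "\<forall>\<^sub>F n in sequentially. norm (hinner_on {..<n} x y + hinner_on {..<n} y x) \<le> 2 * hnorm x * hnorm y"
    by simp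
qed simp

lemma hnorm_add_le:
  assumes "x \<in> HA" "y \<in> HA"
  shows "hnorm (x + y) \<le> hnorm x + hnorm y"
proof (rule hnorm_le)
  have "hinner (x + y) (x + y) = hinner x x + hinner y y + (hinner x y + hinner y x)"
    using assms by (simp add: hinner_add_left hinner_add_right HA_add algebra_simps)
  then have "norm (hinner (x + y) (x + y)) \<le> norm (hinner x x) + norm (hinner y y) + norm (hinner x y + hinner y x)"
    by (metis norm_triangle_le norm_triangle_ineq add_right_mono)
  also have "\<dots> \<le> (hnorm x + hnorm y) ^ 2"
    using norm_hinner_sym_le[OF assms] by (simp add: power2_eq_square algebra_simps flip: hnorm_squared)
  finally show "norm (hinner (x + y) (x + y)) \<le> (hnorm x + hnorm y) ^ 2" .
qed (simp add: hnorm_nonneg add_nonneg_nonneg)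

lemma hnorm_scale_le:
  assumes "x \<in> HA"
  shows "hnorm (\<lambda>k. c * x k) \<le> norm c * hnorm x"
proof (rule hnorm_le)
  have "hinner (\<lambda>k. c * x k) (\<lambda>k. c * x k) = cstar c * (c * hinner x x)"
    using assms by (simp add: hinner_scale_left hinner_scale_right HA_scale)
  also have "norm \<dots> \<le> norm (cstar c) * norm (c * hinner x x)"
    by (rule norm_mult_ineq)
  also have "\<dots> \<le> norm c * (norm c * norm (hinner x x))"
    by (simp add: mult_left_mono norm_mult_ineq)
  finally show "norm (hinner (\<lambda>k. c * x k) (\<lambda>k. c * x k)) \<le> (norm c * hnorm x) ^ 2"
    by (simp add: power_mult_distrib power2_eq_square hnorm_squared[symmetric] ac_simps)
qed (simp add: hnorm_nonneg)

lemma hnorm_scaleR: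
  assumes "x \<in> HA"
  shows "hnorm (\<lambda>k. r *\<^sub>R x k) = \<bar>r\<bar> * hnorm x"
proof -
  have "hinner (\<lambda>k. r *\<^sub>R x k) (\<lambda>k. r *\<^sub>R x k) = (r * r) *\<^sub>R hinner x x"
    using assms unfolding hinner_def HA_iff by (simp add: suminf_scaleR_right)
  then show ?thesis by (simp add: hnorm_def real_sqrt_mult abs_mult)
qed

lemma hnorm_uminus [simp]: "hnorm (- x) = hnorm x"
  by (simp add: hnorm_def hinner_def)

lemma hnorm_minus_commute: "hnorm (x - y) = hnorm (y - x)"
  by (metis hnorm_uminus minus_diff_eq)

lemma hnorm_diff_le: "x \<in> HA \<Longrightarrow> y \<in> HA \<Longrightarrow> hnorm (x - y) \<le> hnorm x + hnorm y"
  unfolding diff_conv_add_uminus using hnorm_add_le[OF _ HA_uminus] by simp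

lemma hnorm_diff_triangle:
  "x \<in> HA \<Longrightarrow> y \<in> HA \<Longrightarrow> z \<in> HA \<Longrightarrow> hnorm (x - z) \<le> hnorm (x - y) + hnorm (y - z)"
  using hnorm_add_le[OF HA_diff HA_diff, of x y y z] by simp

section \<open>Completeness of H_A\<close>

lemma hinner_on_uminus [simp]: "hinner_on I (- x) (- x) = hinner_on I x x"
  by (simp add: hinner_on_def)

lemma HA_Cauchy_coordinate:
  fixes X :: "nat \<Rightarrow> nat \<Rightarrow> 'a::comm_cstar_algebra"
  assumes X: "\<And>n. X n \<in> HA"
    and Cauchy: "\<And>e. e > 0 \<Longrightarrow> \<exists>N. \<forall>m\<ge>N. \<forall>n\<ge>N. hnorm (X m - X n) < e"
  shows "Cauchy (\<lambda>n. X n k)"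
proof (rule CauchyI)
  fix e :: real
  assume "e > 0"
  then obtain N where "\<forall>m\<ge>N. \<forall>n\<ge>N. hnorm (X m - X n) < e" using Cauchy by blast
  moreover have "norm (X m k - X n k) \<le> hnorm (X m - X n)" for m n
    using norm_le_hnorm[OF HA_diff[OF X X], of m n k] by simp
  ultimately show "\<exists>M. \<forall>m\<ge>M. \<forall>n\<ge>M. norm (X m k - X n k) < e"
    by (meson le_less_trans)
qed

lemma norm_hinner_on_limit_le:
  assumes "finite I" "\<And>k. (\<lambda>m. X m k) \<longlonglongrightarrow> x k"
    and "\<And>m. m \<ge> N \<Longrightarrow> norm (hinner_on I (z - X m) (z - X m)) \<le> b"
  shows "norm (hinner_on I (z - x) (z - x)) \<le> b"
proof (rule LIMSEQ_le_const2)
  show "(\<lambda>m. norm (hinner_on I (z - X m) (z - X m))) \<longlonglongrightarrow> norm (hinner_on I (z - x) (z - x))"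
    unfolding hinner_on_def minus_apply by (intro tendsto_intros tendsto_cstar assms(2))
qed (use assms(3) in blast)

lemma HA_of_approximation:
  assumes "\<And>e. e > 0 \<Longrightarrow> \<exists>z\<in>HA. \<forall>I. finite I \<longrightarrow> norm (hinner_on I (z - x) (z - x)) \<le> e"
  shows "x \<in> HA"
  unfolding HA_iff summable_Cauchy
proof (intro allI impI)
  fix e :: real
  assume "e > 0"
  define \<epsilon> where "\<epsilon> = sqrt e / 3"
  have "\<epsilon> > 0" using \<open>e > 0\<close> by (simp add: \<epsilon>_def)
  then obtain z where "z \<in> HA" and z: "\<And>I. finite I \<Longrightarrow> norm (hinner_on I (z - x) (z - x)) \<le> \<epsilon>\<^sup>2"
    using assms[of "\<epsilon>\<^sup>2"] by auto
  obtain M where M: "\<forall>p\<ge>M. \<forall>q. norm (hinner_on {p..<q} z z) < \<epsilon>\<^sup>2"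
    using \<open>z \<in> HA\<close> \<open>\<epsilon> > 0\<close> unfolding HA_iff summable_Cauchy hinner_on_def by (meson zero_less_power)
  have "norm (hinner_on {p..<q} x x) < e" if "p \<ge> M" for p q
  proof -
    have "x = - (z - x) + z" by simp
    then have "sqrt (norm (hinner_on {p..<q} x x))
        \<le> sqrt (norm (hinner_on {p..<q} (z - x) (z - x))) + sqrt (norm (hinner_on {p..<q} z z))"
      by (metis sqrt_norm_hinner_on_add_le hinner_on_uminus)
    also have "\<dots> \<le> \<epsilon> + \<epsilon>"
      using z[of "{p..<q}"] M \<open>p \<ge> M\<close> \<open>\<epsilon> > 0\<close>
      by (intro add_mono) (auto simp: real_le_lsqrt less_imp_le)
    finally have "norm (hinner_on {p..<q} x x) \<le> (2 * \<epsilon>)\<^sup>2"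
      by (intro sqrt_le_D) simp
    also have "\<dots> < e" using \<open>e > 0\<close> by (simp add: \<epsilon>_def power_mult_distrib power_divide)
    finally show ?thesis .
  qed
  then show "\<exists>N. \<forall>m\<ge>N. \<forall>n. norm (\<Sum>k = m..<n. cstar (x k) * x k) < e"
    unfolding hinner_on_def by blast
qed

lemma HA_Cauchy_convergent:
  fixes X :: "nat \<Rightarrow> nat \<Rightarrow> 'a::comm_cstar_algebra"
  assumes X: "\<And>n. X n \<in> HA"
    and Cauchy: "\<And>e. e > 0 \<Longrightarrow> \<exists>N. \<forall>m\<ge>N. \<forall>n\<ge>N. hnorm (X m - X n) < e"
  shows "\<exists>x\<in>HA. \<forall>e>0. \<exists>N. \<forall>n\<ge>N. hnorm (X n - x) \<le> e"
proof -
  obtain x where x: "\<And>k. (\<lambda>n. X n k) \<longlonglongrightarrow> x k"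
    using HA_Cauchy_coordinate[OF assms] unfolding Cauchy_convergent_iff convergent_def by metis
  have tail: "norm (hinner_on I (X n - x) (X n - x)) \<le> e\<^sup>2"
    if "finite I" "e > 0" "\<forall>m\<ge>N. \<forall>n\<ge>N. hnorm (X m - X n) < e" "n \<ge> N" for I e N n
  proof (rule norm_hinner_on_limit_le[OF \<open>finite I\<close> x])
    fix m
    assume "m \<ge> N"
    have "norm (hinner_on I (X n - X m) (X n - X m)) \<le> hnorm (X n - X m) ^ 2"
      using norm_hinner_on_le_hinner[OF HA_diff[OF X X] \<open>finite I\<close>] by (simp add: hnorm_squared)
    also have "\<dots> \<le> e\<^sup>2"
      using that \<open>m \<ge> N\<close> by (intro power_mono) (auto simp: hnorm_nonneg less_imp_le)
    finally show "norm (hinner_on I (X n - X m) (X n - X m)) \<le> e\<^sup>2" .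
  qed
  have "x \<in> HA"
  proof (rule HA_of_approximation)
    fix e :: real
    assume "e > 0"
    then obtain N where "\<forall>m\<ge>N. \<forall>n\<ge>N. hnorm (X m - X n) < sqrt e" using Cauchy[of "sqrt e"] by auto
    then show "\<exists>z\<in>HA. \<forall>I. finite I \<longrightarrow> norm (hinner_on I (z - x) (z - x)) \<le> e"
      using tail[of _ "sqrt e" N N] X \<open>e > 0\<close> by (intro bexI[of _ "X N"]) auto
  qed
  moreover have "\<exists>N. \<forall>n\<ge>N. hnorm (X n - x) \<le> e" if "e > 0" for e
  proof -
    obtain N where N: "\<forall>m\<ge>N. \<forall>n\<ge>N. hnorm (X m - X n) < e" using Cauchy[OF \<open>e > 0\<close>] by blast
    have "hnorm (X n - x) \<le> e" if "n \<ge> N" for n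
    proof (rule hnorm_le)
      have "(\<lambda>K. norm (hinner_on {..<K} (X n - x) (X n - x))) \<longlonglongrightarrow> norm (hinner (X n - x) (X n - x))"
        using HA_diff[OF X \<open>x \<in> HA\<close>] by (intro tendsto_norm hinner_on_tendsto_hinner)
      then show "norm (hinner (X n - x) (X n - x)) \<le> e\<^sup>2"
        using tail[OF _ \<open>e > 0\<close> N that] by (intro LIMSEQ_le_const2) auto
    qed (use \<open>e > 0\<close> in simp)
    then show ?thesis by blast
  qed
  ultimately show ?thesis by blast
qed

lemma Metric_space_HA: "Metric_space HA (\<lambda>x y. hnorm (x - y))"
proof
  show "hnorm (x - y) = 0 \<longleftrightarrow> x = y" if "x \<in> HA" "y \<in> HA" for x y
    using hnorm_eq_0[OF HA_diff[OF that]] by (auto simp: hnorm_def hinner_def)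
qed (auto simp: hnorm_nonneg hnorm_minus_commute intro: hnorm_diff_triangle)

lemma mcomplete_HA: "Metric_space.mcomplete HA (\<lambda>x y. hnorm (x - y))"
  unfolding Metric_space.mcomplete_def[OF Metric_space_HA] Metric_space.MCauchy_def[OF Metric_space_HA]
    Metric_space.limitin_metric[OF Metric_space_HA] eventually_sequentially
proof (intro allI impI)
  fix X :: "nat \<Rightarrow> nat \<Rightarrow> 'a"
  assume X: "range X \<subseteq> HA \<and> (\<forall>e>0. \<exists>N. \<forall>m n. N \<le> m \<longrightarrow> N \<le> n \<longrightarrow> hnorm (X m - X n) < e)"
  have "\<exists>x\<in>HA. \<forall>e>0. \<exists>N. \<forall>n\<ge>N. hnorm (X n - x) \<le> e"
  proof (rule HA_Cauchy_convergent)
    show "X n \<in> HA" for n using X by auto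
    show "\<exists>N. \<forall>m\<ge>N. \<forall>n\<ge>N. hnorm (X m - X n) < e" if "e > 0" for e
      using X that by auto
  qed
  then obtain x where "x \<in> HA" and x: "\<forall>e>0. \<exists>N. \<forall>n\<ge>N. hnorm (X n - x) \<le> e"
    by blast
  have "\<exists>N. \<forall>n\<ge>N. X n \<in> HA \<and> hnorm (X n - x) < e" if "e > 0" for e
    using x[rule_format, of "e / 2"] X that by (fastforce simp: image_subset_iff)
  then show "\<exists>x. x \<in> HA \<and> (\<forall>e>0. \<exists>N. \<forall>n\<ge>N. X n \<in> HA \<and> hnorm (X n - x) < e)"
    using \<open>x \<in> HA\<close> by blast
qed

section \<open>Surjectivity by perturbation\<close>

lemma HA_surj_perturbation:
  fixes A B :: "(nat \<Rightarrow> 'a::comm_cstar_algebra) \<Rightarrow> nat \<Rightarrow> 'a"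
  assumes A: "\<And>x. x \<in> HA \<Longrightarrow> A x \<in> HA" "\<And>x y. x \<in> HA \<Longrightarrow> y \<in> HA \<Longrightarrow> A (x - y) = A x - A y"
      "\<And>y. y \<in> HA \<Longrightarrow> \<exists>x\<in>HA. A x = y" "\<And>x. x \<in> HA \<Longrightarrow> hnorm x \<le> K * hnorm (A x)"
    and B: "\<And>x. x \<in> HA \<Longrightarrow> B x \<in> HA" "\<And>x y. x \<in> HA \<Longrightarrow> y \<in> HA \<Longrightarrow> B (x - y) = B x - B y"
      "\<And>x. x \<in> HA \<Longrightarrow> hnorm (B x) \<le> L * hnorm x"
    and "K \<ge> 0" "K * L < 1" "y \<in> HA"
  shows "\<exists>x\<in>HA. A x + B x = y"
proof -
  define g where "g z = (SOME x. x \<in> HA \<and> A x = z)" for z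
  have g: "g z \<in> HA" "A (g z) = z" if "z \<in> HA" for z
    using someI_ex[OF A(3)[OF that, unfolded Bex_def]] by (simp_all add: g_def)
  define f where "f x = g (y - B x)" for x
  have f_HA: "f x \<in> HA" if "x \<in> HA" for x
    using g HA_diff[OF \<open>y \<in> HA\<close> B(1)[OF that]] by (simp add: f_def)
  have "hnorm (f x1 - f x2) \<le> (K * L) * hnorm (x1 - x2)" if "x1 \<in> HA" "x2 \<in> HA" for x1 x2
  proof -
    have "A (f x1 - f x2) = B (x2 - x1)"
      using that g HA_diff[OF \<open>y \<in> HA\<close> B(1)] by (simp add: A(2) B(2) f_HA f_def)
    then have "hnorm (f x1 - f x2) \<le> K * hnorm (B (x2 - x1))"
      using A(4)[OF HA_diff[OF f_HA[OF that(1)] f_HA[OF that(2)]]] by simp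
    also have "\<dots> \<le> K * (L * hnorm (x1 - x2))"
      using B(3)[OF HA_diff[OF that(2,1)]] \<open>K \<ge> 0\<close> by (simp add: mult_left_mono hnorm_minus_commute)
    finally show ?thesis by (simp add: mult.assoc)
  qed
  then obtain x where "x \<in> HA" "f x = x"
    using Metric_space.Banach_fixedpoint_thm[OF Metric_space_HA mcomplete_HA _ _ \<open>K * L < 1\<close>]
      HA_zero f_HA by blast
  then have "A x = y - B x" using g HA_diff[OF \<open>y \<in> HA\<close> B(1)] by (metis f_def)
  then show ?thesis using \<open>x \<in> HA\<close> by (intro bexI[of _ x]) simp_all
qed

lemma HA_surj_continuation:
  fixes A B :: "(nat \<Rightarrow> 'a::comm_cstar_algebra) \<Rightarrow> nat \<Rightarrow> 'a"
  assumes A: "\<And>x. x \<in> HA \<Longrightarrow> A x \<in> HA" "\<And>x y. x \<in> HA \<Longrightarrow> y \<in> HA \<Longrightarrow> A (x - y) = A x - A y"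
      "\<And>y. y \<in> HA \<Longrightarrow> \<exists>x\<in>HA. A x = y"
    and B: "\<And>x. x \<in> HA \<Longrightarrow> B x \<in> HA" "\<And>x y. x \<in> HA \<Longrightarrow> y \<in> HA \<Longrightarrow> B (x - y) = B x - B y"
      "\<And>x. x \<in> HA \<Longrightarrow> hnorm (B x) \<le> L * hnorm x"
    and bounded_below: "\<And>t x. 0 \<le> t \<Longrightarrow> t \<le> 1 \<Longrightarrow> x \<in> HA \<Longrightarrow> hnorm x \<le> K * hnorm (A x + (\<lambda>k. t *\<^sub>R B x k))"
    and "K \<ge> 0" "y \<in> HA"
  shows "\<exists>x\<in>HA. A x + B x = y"
proof -
  define M :: nat where "M = nat \<lceil>K * L\<rceil> + 1"
  define \<delta> where "\<delta> = 1 / real M"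
  have "\<delta> > 0" "real M * \<delta> = 1" by (simp_all add: \<delta>_def M_def)
  have "K * L < real M" unfolding M_def by linarith
  then have "K * (\<delta> * L) < 1" using \<open>real M * \<delta> = 1\<close> \<open>\<delta> > 0\<close> by (simp add: \<delta>_def field_simps)
  have "\<forall>y\<in>HA. \<exists>x\<in>HA. A x + (\<lambda>k. (real n * \<delta>) *\<^sub>R B x k) = y" if "n \<le> M" for n
    using that
  proof (induct n)
    case 0
    then show ?case using A(3) by (simp add: zero_fun_def)
  next
    case (Suc n)
    have t: "0 \<le> real n * \<delta>" "real n * \<delta> \<le> 1"
      using Suc(2) \<open>\<delta> > 0\<close> mult_right_mono[of "real n" "real M" \<delta>] \<open>real M * \<delta> = 1\<close> by simp_all
    show ?case
    proof
      fix y :: "nat \<Rightarrow> 'a"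
      assume "y \<in> HA"
      have "\<exists>x\<in>HA. (A x + (\<lambda>k. (real n * \<delta>) *\<^sub>R B x k)) + (\<lambda>k. \<delta> *\<^sub>R B x k) = y"
      proof (rule HA_surj_perturbation[of _ K _ "\<delta> * L"])
        show "A x + (\<lambda>k. (real n * \<delta>) *\<^sub>R B x k) \<in> HA" "(\<lambda>k. \<delta> *\<^sub>R B x k) \<in> HA" if "x \<in> HA" for x
          using that by (simp_all add: HA_add HA_scaleR A(1) B(1))
        show "A (x - x') + (\<lambda>k. (real n * \<delta>) *\<^sub>R B (x - x') k)
            = A x + (\<lambda>k. (real n * \<delta>) *\<^sub>R B x k) - (A x' + (\<lambda>k. (real n * \<delta>) *\<^sub>R B x' k))"
          "(\<lambda>k. \<delta> *\<^sub>R B (x - x') k) = (\<lambda>k. \<delta> *\<^sub>R B x k) - (\<lambda>k. \<delta> *\<^sub>R B x' k)"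
          if "x \<in> HA" "x' \<in> HA" for x x'
          using that by (simp_all add: A(2) B(2) fun_eq_iff scaleR_diff_right)
        show "\<exists>x\<in>HA. A x + (\<lambda>k. (real n * \<delta>) *\<^sub>R B x k) = z" if "z \<in> HA" for z
          using Suc.hyps[OF Suc_leD[OF Suc.prems]] that by blast
        show "hnorm x \<le> K * hnorm (A x + (\<lambda>k. (real n * \<delta>) *\<^sub>R B x k))" if "x \<in> HA" for x
          using bounded_below[OF t that] .
        show "hnorm (\<lambda>k. \<delta> *\<^sub>R B x k) \<le> \<delta> * L * hnorm x" if "x \<in> HA" for x
          using B(3)[OF that] \<open>\<delta> > 0\<close> by (simp add: hnorm_scaleR B(1) that mult.assoc)
      qed (use \<open>K \<ge> 0\<close> \<open>K * (\<delta> * L) < 1\<close> \<open>y \<in> HA\<close> in \<open>simp_all add: mult.assoc\<close>)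
      then show "\<exists>x\<in>HA. A x + (\<lambda>k. (real (Suc n) * \<delta>) *\<^sub>R B x k) = y"
        by (simp add: distrib_right scaleR_add_left plus_fun_def add_ac)
    qed
  qed
  from this[of M] show ?thesis using \<open>real M * \<delta> = 1\<close> \<open>y \<in> HA\<close> by (simp add: plus_fun_def)
qed

section \<open>Self-adjoint operators minus non-self-adjoint scalars\<close>

text \<open>The identity hinner y x - hinner x y = (c - cstar c) * hinner x x for y = S x - c x
  bounds x by y as soon as c - cstar c is invertible.\<close>

lemma hnorm_le_symmetric_minus_scale:
  assumes x: "x \<in> HA" and "S x \<in> HA" "hinner (S x) x = hinner x (S x)"
    and \<beta>: "\<beta> * (c - cstar c) = 1"
  shows "hnorm x \<le> 2 * norm \<beta> * hnorm (S x - (\<lambda>k. c * x k))"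
proof -
  define y where "y = S x - (\<lambda>k. c * x k)"
  define i :: 'a where "i = of_complex \<i>"
  define y' where "y' = (\<lambda>k. i * y k)"
  have "y \<in> HA" using assms by (simp add: y_def HA_diff HA_scale)
  then have y: "y \<in> HA" "y' \<in> HA" unfolding y'_def by (simp_all add: HA_scale)
  have "hinner y x - hinner x y = (c - cstar c) * hinner x x"
    using assms by (simp add: y_def hinner_diff_left hinner_diff_right hinner_scale_left hinner_scale_right
        HA_scale algebra_simps)
  then have xx: "hinner x x = \<beta> * (hinner y x - hinner x y)"
    using \<beta> by (simp add: mult.assoc[symmetric])
  have "hinner y' x + hinner x y' = - i * (hinner y x - hinner x y)"
    using y x by (simp add: y'_def hinner_scale_left hinner_scale_right i_def algebra_simps)
  then have "hinner y x - hinner x y = i * (hinner y' x + hinner x y')"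
    by (simp add: i_def mult.assoc[symmetric] of_complex_i_squared)
  then have "hnorm x ^ 2 = norm (\<beta> * (i * (hinner y' x + hinner x y')))"
    by (simp add: hnorm_squared xx)
  also have "\<dots> \<le> norm \<beta> * norm (i * (hinner y' x + hinner x y'))"
    by (rule norm_mult_ineq)
  also have "\<dots> \<le> norm \<beta> * (norm i * norm (hinner y' x + hinner x y'))"
    by (simp add: mult_left_mono norm_mult_ineq)
  also have "\<dots> \<le> norm \<beta> * (2 * hnorm y' * hnorm x)"
    using norm_hinner_sym_le[OF y(2) x] by (simp add: i_def mult_left_mono)
  also have "hnorm y' \<le> hnorm y"
    using hnorm_scale_le[OF y(1), of i] by (simp add: y'_def i_def)
  then have "norm \<beta> * (2 * hnorm y' * hnorm x) \<le> norm \<beta> * (2 * hnorm y * hnorm x)"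
    by (intro mult_left_mono mult_right_mono) (simp_all add: hnorm_nonneg)
  finally have "hnorm x * hnorm x \<le> (2 * norm \<beta> * hnorm y) * hnorm x"
    by (simp add: power2_eq_square ac_simps)
  then show ?thesis
    using hnorm_nonneg[of x] by (cases "hnorm x = 0") (simp_all add: y_def hnorm_nonneg)
qed

context
  fixes F :: "(nat \<Rightarrow> 'a::comm_cstar_algebra) \<Rightarrow> nat \<Rightarrow> 'a"
  assumes F: "self_adjoint_op F"
begin

lemma self_adjoint_op_HA: "x \<in> HA \<Longrightarrow> F x \<in> HA"
  using F by (simp add: self_adjoint_op_def Ba_def)

lemma self_adjoint_op_add: "x \<in> HA \<Longrightarrow> y \<in> HA \<Longrightarrow> F (x + y) = F x + F y"
  using F by (simp add: self_adjoint_op_def Ba_def plus_fun_def)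

lemma self_adjoint_op_mult_right: "x \<in> HA \<Longrightarrow> F (\<lambda>k. x k * a) = (\<lambda>k. F x k * a)"
  using F by (simp add: self_adjoint_op_def Ba_def)

lemma self_adjoint_op_scale: "x \<in> HA \<Longrightarrow> F (\<lambda>k. c * x k) = (\<lambda>k. c * F x k)"
  using self_adjoint_op_mult_right[of x c] by (simp add: mult.commute)

lemma self_adjoint_op_diff:
  assumes "x \<in> HA" "y \<in> HA"
  shows "F (x - y) = F x - F y"
proof -
  have "x - y = x + (\<lambda>k. (- 1) * y k)" by (simp add: fun_eq_iff)
  then have "F (x - y) = F x + F (\<lambda>k. (- 1) * y k)"
    using self_adjoint_op_add[OF assms(1) HA_scale[OF assms(2)]] by (simp only:)
  also have "\<dots> = F x - F y" unfolding self_adjoint_op_scale[OF assms(2)] by (simp add: fun_eq_iff)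
  finally show ?thesis .
qed

lemma self_adjoint_op_hinner: "x \<in> HA \<Longrightarrow> y \<in> HA \<Longrightarrow> hinner (F x) y = hinner x (F y)"
  using F by (simp add: self_adjoint_op_def)

lemma self_adjoint_op_bounded: "\<exists>L. \<forall>x\<in>HA. hnorm (F x) \<le> L * hnorm x"
  using F by (simp add: self_adjoint_op_def Ba_def)

lemma self_adjoint_op_minus_scale_HA: "x \<in> HA \<Longrightarrow> F x - (\<lambda>k. c * x k) \<in> HA"
  by (simp add: HA_diff HA_scale self_adjoint_op_HA)

lemma self_adjoint_op_minus_scale_bounded_below:
  "\<beta> * (\<alpha> - cstar \<alpha>) = 1 \<Longrightarrow> x \<in> HA \<Longrightarrow> hnorm x \<le> 2 * norm \<beta> * hnorm (F x - (\<lambda>k. \<alpha> * x k))"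
  by (rule hnorm_le_symmetric_minus_scale) (simp_all add: self_adjoint_op_HA self_adjoint_op_hinner)

lemma self_adjoint_op_minus_scale_adjoint:
  "x \<in> HA \<Longrightarrow> y \<in> HA \<Longrightarrow> hinner (F x - (\<lambda>k. c * x k)) y = hinner x (F y - (\<lambda>k. cstar c * y k))"
  by (simp add: hinner_diff_left hinner_diff_right hinner_scale_left hinner_scale_right HA_scale
      self_adjoint_op_HA self_adjoint_op_hinner)

text \<open>Continuation along t (F - a) - d for t from 0 to 1, where a and d are the
  self-adjoint and the skew-adjoint part of alpha.\<close>

lemma self_adjoint_op_minus_scale_surj:
  assumes \<beta>: "\<beta> * (\<alpha> - cstar \<alpha>) = 1" and "y \<in> HA"
  shows "\<exists>x\<in>HA. F x - (\<lambda>k. \<alpha> * x k) = y"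
proof -
  define a where "a = (1/2) *\<^sub>R (\<alpha> + cstar \<alpha>)"
  define d where "d = \<alpha> - a"
  have "cstar a = a" by (simp add: a_def cstar_add add.commute)
  then have "d - cstar d = \<alpha> - cstar \<alpha>" by (simp add: d_def)
  have "2 *\<^sub>R d = \<alpha> - cstar \<alpha>" by (simp add: d_def a_def algebra_simps scaleR_2)
  moreover have "(- (2 *\<^sub>R \<beta>)) * (- d) = \<beta> * (2 *\<^sub>R d)" by simp
  ultimately have "(- (2 *\<^sub>R \<beta>)) * (- d) = 1" using \<beta> by simp
  obtain L where L: "\<And>x. x \<in> HA \<Longrightarrow> hnorm (F x) \<le> L * hnorm x"
    using self_adjoint_op_bounded by blast
  have "\<exists>x\<in>HA. (\<lambda>k. - d * x k) + (F x - (\<lambda>k. a * x k)) = y"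
  proof (rule HA_surj_continuation[where A = "\<lambda>x k. - d * x k" and B = "\<lambda>x. F x - (\<lambda>k. a * x k)"
        and L = "L + norm a" and K = "2 * norm \<beta>"])
    show "(\<lambda>k. - d * x k) \<in> HA" "F x - (\<lambda>k. a * x k) \<in> HA" if "x \<in> HA" for x
      using HA_scale[OF that] self_adjoint_op_minus_scale_HA[OF that] by blast+
    show "(\<lambda>k. - d * (x - x') k) = (\<lambda>k. - d * x k) - (\<lambda>k. - d * x' k)"
      "F (x - x') - (\<lambda>k. a * (x - x') k) = F x - (\<lambda>k. a * x k) - (F x' - (\<lambda>k. a * x' k))"
      if "x \<in> HA" "x' \<in> HA" for x x'
      using that by (simp_all add: self_adjoint_op_diff fun_eq_iff algebra_simps)
    show "\<exists>x\<in>HA. (\<lambda>k. - d * x k) = z" if "z \<in> HA" for z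
      by (rule HA_scale_surj[OF \<open>(- (2 *\<^sub>R \<beta>)) * (- d) = 1\<close> that])
    show "hnorm (F x - (\<lambda>k. a * x k)) \<le> (L + norm a) * hnorm x" if "x \<in> HA" for x
      using hnorm_diff_le[OF self_adjoint_op_HA HA_scale, OF that that, of a] L[OF that]
        hnorm_scale_le[OF that, of a]
      by (simp add: distrib_right)
    show "hnorm x \<le> 2 * norm \<beta> * hnorm ((\<lambda>k. - d * x k) + (\<lambda>k. t *\<^sub>R (F x - (\<lambda>k. a * x k)) k))"
      if "x \<in> HA" for t x
    proof -
      have "hnorm x \<le> 2 * norm \<beta> * hnorm ((\<lambda>k. t *\<^sub>R F x k) - (\<lambda>k. (d + t *\<^sub>R a) * x k))"
        using that \<beta> \<open>cstar a = a\<close> \<open>d - cstar d = \<alpha> - cstar \<alpha>\<close>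
        by (intro hnorm_le_symmetric_minus_scale)
          (simp_all add: HA_scaleR self_adjoint_op_HA hinner_scaleR_left hinner_scaleR_right
            self_adjoint_op_hinner cstar_add)
      then show ?thesis by (simp add: fun_diff_def plus_fun_def algebra_simps)
    qed
  qed (use \<open>y \<in> HA\<close> in simp_all)
  moreover have "(\<lambda>k. - d * x k) + (F x - (\<lambda>k. a * x k)) = F x - (\<lambda>k. \<alpha> * x k)" for x
    by (simp add: d_def fun_eq_iff algebra_simps)
  ultimately show ?thesis by metis
qed

end

section \<open>Inverses in B^a(H_A)\<close>

lemma HA_module_map_diff:
  assumes T_add: "\<And>x y. x \<in> HA \<Longrightarrow> y \<in> HA \<Longrightarrow> T (x + y) = T x + T y"
    and T_mult: "\<And>x a. x \<in> HA \<Longrightarrow> T (\<lambda>k. x k * a) = (\<lambda>k. T x k * a)"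
    and "x \<in> HA" "y \<in> HA"
  shows "T (x - y) = T x - T y"
proof -
  have "(\<lambda>k. y k * (- 1)) \<in> HA" using HA_scale[OF \<open>y \<in> HA\<close>, of "- 1"] by simp
  then have "T (x + (\<lambda>k. y k * (- 1))) = T x + (\<lambda>k. T y k * (- 1))"
    using T_add[OF \<open>x \<in> HA\<close>] T_mult[OF \<open>y \<in> HA\<close>] by metis
  moreover have "x + (\<lambda>k. y k * (- 1)) = x - y" by (simp add: fun_eq_iff)
  ultimately have "T (x - y) = T x + (\<lambda>k. T y k * (- 1))" by (simp only:)
  then show ?thesis by (simp add: fun_eq_iff)
qed

lemma bij_betw_HA_bounded_below:
  assumes "\<And>x. x \<in> HA \<Longrightarrow> T x \<in> HA" "\<And>x y. x \<in> HA \<Longrightarrow> y \<in> HA \<Longrightarrow> T (x - y) = T x - T y"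
    and "\<And>x. x \<in> HA \<Longrightarrow> hnorm x \<le> K * hnorm (T x)" "\<And>y. y \<in> HA \<Longrightarrow> \<exists>x\<in>HA. T x = y"
  shows "bij_betw T HA HA"
proof (rule bij_betw_imageI)
  show "inj_on T HA"
  proof (rule inj_onI)
    fix x y
    assume "x \<in> HA" "y \<in> HA" "T x = T y"
    then have "hnorm (x - y) \<le> 0" using assms(2,3)[of "x - y"] assms(2)[of x y] by (simp add: HA_diff hnorm_zero)
    then have "hnorm (x - y) = 0" using hnorm_nonneg[of "x - y"] by linarith
    then have "x - y = 0" by (rule hnorm_eq_0[OF HA_diff[OF \<open>x \<in> HA\<close> \<open>y \<in> HA\<close>]])
    then show "x = y" by simp
  qed
  show "T ` HA = HA" using assms(1,4) by blast
qed

text \<open>The adjoint of the inverse is the inverse of the adjoint, which is why surjectivity of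
  the adjoint is assumed.\<close>

lemma Ba_inverse_exists:
  fixes T T' :: "(nat \<Rightarrow> 'a::comm_cstar_algebra) \<Rightarrow> nat \<Rightarrow> 'a"
  assumes T_HA: "\<And>x. x \<in> HA \<Longrightarrow> T x \<in> HA"
    and T_add: "\<And>x y. x \<in> HA \<Longrightarrow> y \<in> HA \<Longrightarrow> T (x + y) = T x + T y"
    and T_mult: "\<And>x a. x \<in> HA \<Longrightarrow> T (\<lambda>k. x k * a) = (\<lambda>k. T x k * a)"
    and bounded_below: "\<And>x. x \<in> HA \<Longrightarrow> hnorm x \<le> K * hnorm (T x)"
    and surj: "\<And>y. y \<in> HA \<Longrightarrow> \<exists>x\<in>HA. T x = y"
    and adjoint: "\<And>x y. x \<in> HA \<Longrightarrow> y \<in> HA \<Longrightarrow> hinner (T x) y = hinner x (T' y)"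
    and surj': "\<And>y. y \<in> HA \<Longrightarrow> \<exists>x\<in>HA. T' x = y"
    and "K \<ge> 0"
  shows "\<exists>G. is_Ba_inverse G T \<and> opnorm G \<le> K"
proof -
  define G where "G = inv_into HA T"
  define S where "S = inv_into HA T'"
  have bij: "bij_betw T HA HA"
    using T_HA HA_module_map_diff[OF T_add T_mult] bounded_below surj by (rule bij_betw_HA_bounded_below)
  have G: "G y \<in> HA" "T (G y) = y" if "y \<in> HA" for y
    using that bij by (simp_all add: G_def bij_betw_inv_into_right inv_into_into bij_betw_imp_surj_on)
  have GT: "G (T x) = x" if "x \<in> HA" for x
    using that bij by (simp add: G_def bij_betw_inv_into_left)
  have S: "S y \<in> HA" "T' (S y) = y" if "y \<in> HA" for y
  proof -
    have "y \<in> T' ` HA" using surj'[OF that] by blast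
    then show "S y \<in> HA" "T' (S y) = y" by (simp_all add: S_def inv_into_into f_inv_into_f)
  qed
  have bound: "hnorm (G y) \<le> K * hnorm y" if "y \<in> HA" for y
    using bounded_below[OF G(1)[OF that]] G(2)[OF that] by simp
  have "G \<in> Ba"
    unfolding Ba_def
  proof (intro CollectI conjI ballI allI exI[of _ K] exI[of _ S])
    fix x y :: "nat \<Rightarrow> 'a" and a :: 'a
    assume "x \<in> HA" "y \<in> HA"
    have "G (x + y) = G x + G y"
      using GT[OF HA_add[OF G(1) G(1)], OF \<open>x \<in> HA\<close> \<open>y \<in> HA\<close>] \<open>x \<in> HA\<close> \<open>y \<in> HA\<close>
      by (simp add: T_add G)
    then show "G (\<lambda>k. x k + y k) = (\<lambda>k. G x k + G y k)" by (simp add: plus_fun_def)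
    have Ga: "(\<lambda>k. G x k * a) \<in> HA"
      using HA_scale[OF G(1)[OF \<open>x \<in> HA\<close>], of a] by (simp add: mult.commute)
    have "T (\<lambda>k. G x k * a) = (\<lambda>k. x k * a)"
      using T_mult[OF G(1)[OF \<open>x \<in> HA\<close>]] G(2)[OF \<open>x \<in> HA\<close>] by simp
    then show "G (\<lambda>k. x k * a) = (\<lambda>k. G x k * a)" using GT[OF Ga] by simp
    show "hinner (G x) y = hinner x (S y)"
      using adjoint[OF G(1) S(1), OF \<open>x \<in> HA\<close> \<open>y \<in> HA\<close>] \<open>x \<in> HA\<close> \<open>y \<in> HA\<close> by (simp add: G S)
  qed (simp_all add: G S bound)
  moreover have "opnorm G \<le> K"
    unfolding opnorm_def
  proof (rule cSup_least)
    show "{hnorm (G x) |x. x \<in> HA \<and> hnorm x \<le> 1} \<noteq> {}"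
      using HA_zero hnorm_zero[where 'a='a] by (auto intro!: exI[of _ "hnorm (G 0)"] exI[of _ 0])
    show "r \<le> K" if r: "r \<in> {hnorm (G x) |x. x \<in> HA \<and> hnorm x \<le> 1}" for r
    proof -
      obtain x where "x \<in> HA" "hnorm x \<le> 1" "r = hnorm (G x)" using r by blast
      then show ?thesis using bound mult_left_le[of "hnorm x" K] \<open>K \<ge> 0\<close> by fastforce
    qed
  qed
  ultimately show ?thesis
    using GT G unfolding is_Ba_inverse_def by blast
qed

theorem corollary2p17:
  fixes F :: "(nat \<Rightarrow> 'a::comm_cstar_algebra) \<Rightarrow> (nat \<Rightarrow> 'a)"
    and \<alpha> \<beta> :: 'a
  assumes "self_adjoint_op F"
    and "\<beta> * (\<alpha> - cstar \<alpha>) = 1" and "(\<alpha> - cstar \<alpha>) * \<beta> = 1"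
  shows "\<exists>G. is_Ba_inverse G (op_diff F (scal_op \<alpha>))
             \<and> opnorm G \<le> 2 * norm \<beta>"
proof -
  note F = assms(1)
  have T: "op_diff F (scal_op \<alpha>) = (\<lambda>x. F x - (\<lambda>k. \<alpha> * x k))"
    by (simp add: op_diff_def scal_op_def fun_eq_iff)
  have \<beta>': "(- \<beta>) * (cstar \<alpha> - cstar (cstar \<alpha>)) = 1" using assms(2) by (simp add: algebra_simps)
  show ?thesis
    unfolding T
  proof (rule Ba_inverse_exists[where T' = "\<lambda>y. F y - (\<lambda>k. cstar \<alpha> * y k)"])
    show "F (x + y) - (\<lambda>k. \<alpha> * (x + y) k) = F x - (\<lambda>k. \<alpha> * x k) + (F y - (\<lambda>k. \<alpha> * y k))"
      if "x \<in> HA" "y \<in> HA" for x y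
      using that by (simp add: self_adjoint_op_add[OF F] fun_eq_iff algebra_simps)
    show "F (\<lambda>k. x k * a) - (\<lambda>k. \<alpha> * (x k * a)) = (\<lambda>k. (F x - (\<lambda>k. \<alpha> * x k)) k * a)"
      if "x \<in> HA" for x a
      using that by (simp add: self_adjoint_op_scale[OF F] fun_eq_iff algebra_simps)
    show "\<exists>x\<in>HA. F x - (\<lambda>k. cstar \<alpha> * x k) = y" if "y \<in> HA" for y
      using self_adjoint_op_minus_scale_surj[OF F \<beta>' that] .
  qed (use assms(2) in \<open>simp_all add: self_adjoint_op_minus_scale_HA[OF F]
      self_adjoint_op_minus_scale_bounded_below[OF F] self_adjoint_op_minus_scale_surj[OF F]
      self_adjoint_op_minus_scale_adjoint[OF F]\<close>)
qed

end
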